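(* In the setting described in the context, for every integer $n\geq1$ all zeros of the monic orthogonal section $\pi_n$ are simple.
   Context: Let $\tau\in i\mathbb{R}_{>0}$, $\Lambda_\tau=\mathbb{Z}+\tau\mathbb{Z}$ and $\mathcal E_\tau=\mathbb{C}/\Lambda_\tau$, with $p$ the coordinate inherited from $\mathbb{C}$. Let $\gamma\subset\mathcal E_\tau$ be the image of the line $\{\mathrm{Im}\,p=\tfrac12\mathrm{Im}\,\tau\}$, parametrized as $p=\tfrac\tau2+s$, $s\in[0,1]$, oriented by increasing $s$. Fix $\mathscr D\in(0,1)$ (a point of $\mathcal E_\tau$). Let $w$ be analytic in a strip containing $\gamma$ and real-valued on $\gamma$, giving the positive measure ${\rm e}^{w(p)}\mathrm dp$ on $\gamma$. For $n\geq0$ let $\mathscr P_n$ be the space of meromorphic functions on $\mathcal E_\tau$ whose only possible poles are of order at most $n$ at $p\equiv0$ and at most simple at $p\equiv\mathscr D$. The monic orthogonal section $\pi_n$ ($n\geq1$) is the element of $\mathscr P_n$ with $\pi_n(p)=p^{-n}(1+\mathcal O(p))$ as $p\to0$ and $\int_\gamma\pi_n f\,{\rm e}^{w}\mathrm dp=0$ for all $f\in\mathscr P_{n-1}$ (it exists). *)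

theory Defs
  imports "HOL-Complex_Analysis.Complex_Analysis" "HOL-Library.Landau_Symbols"
begin

definition lattice :: "complex \<Rightarrow> complex set" where
  "lattice \<tau> = {of_int m + of_int k * \<tau> | m k. True}"

text \<open>Allowed pole set: lattice points (p = 0 on the torus) and translates of D.\<close>
definition pole_set :: "complex \<Rightarrow> real \<Rightarrow> complex set" where
  "pole_set \<tau> d = lattice \<tau> \<union> ((\<lambda>l. complex_of_real d + l) ` lattice \<tau>)"

definition pole_order_le :: "(complex \<Rightarrow> complex) \<Rightarrow> complex \<Rightarrow> nat \<Rightarrow> bool" where
  "pole_order_le f a n \<longleftrightarrow> (\<exists>r>0. \<exists>g. g holomorphic_on ball a r \<and>
       (\<forall>z\<in>ball a r - {a}. f z = g z / (z - a) ^ n))"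

text \<open>The space P_n of meromorphic functions on the torus C/(Z+tau Z) with poles of order
  at most n at p = 0 and at most simple at p = D; represented by doubly periodic functions on C.\<close>
definition sec_space :: "complex \<Rightarrow> real \<Rightarrow> nat \<Rightarrow> (complex \<Rightarrow> complex) \<Rightarrow> bool" where
  "sec_space \<tau> d n f \<longleftrightarrow>
     (\<forall>z. z \<notin> pole_set \<tau> d \<longrightarrow> f (z + 1) = f z \<and> f (z + \<tau>) = f z) \<and>
     f holomorphic_on (- pole_set \<tau> d) \<and>
     (\<forall>l\<in>lattice \<tau>. pole_order_le f l n) \<and>
     (\<forall>l\<in>lattice \<tau>. pole_order_le f (complex_of_real d + l) 1)"

definition is_zero_at :: "(complex \<Rightarrow> complex) \<Rightarrow> complex \<Rightarrow> bool" where
  "is_zero_at f z \<longleftrightarrow> (f \<longlongrightarrow> 0) (at z)"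

definition simple_zero_at :: "(complex \<Rightarrow> complex) \<Rightarrow> complex \<Rightarrow> bool" where
  "simple_zero_at f z \<longleftrightarrow> (\<exists>r>0. \<exists>g. g holomorphic_on ball z r \<and> g z \<noteq> 0 \<and>
       (\<forall>u\<in>ball z r - {z}. f u = (u - z) * g u))"

end

theory Submission
  imports Defs
begin

definition qseries :: "(complex \<Rightarrow> complex) \<Rightarrow> real \<Rightarrow> complex \<Rightarrow> complex" where
  "qseries \<rho> Q X = (\<Sum>k. \<rho> (X * of_real Q ^ k))"

lemma bigo_inverse_boundE:
  fixes \<rho> :: "complex \<Rightarrow> complex"
  assumes "\<rho> \<in> O[at_infinity](\<lambda>Y. 1 / Y)"
  obtains b c where "b \<ge> 2" "c > 0" "\<And>Y. b \<le> norm Y \<Longrightarrow> norm (\<rho> Y) \<le> c / norm Y"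
proof -
  obtain c where c: "c > 0" "eventually (\<lambda>Y. norm (\<rho> Y) \<le> c * norm (1 / Y)) at_infinity"
    using landau_o.bigE[OF assms] by blast
  then obtain b where "\<And>Y. b \<le> norm Y \<Longrightarrow> norm (\<rho> Y) \<le> c * norm (1 / Y)"
    unfolding eventually_at_infinity by blast
  then show ?thesis
    by (intro that[of "max b 2" c]) (auto simp: c(1) norm_divide)
qed

lemma qseries_tail_bound:
  fixes \<rho> :: "complex \<Rightarrow> complex"
  assumes Q: "Q > 1" and a: "a > 0" and N: "b \<le> a * Q ^ N" and X: "a \<le> norm X"
    and bound: "\<And>Y. b \<le> norm Y \<Longrightarrow> norm (\<rho> Y) \<le> c / norm Y" and c: "c > 0"
  shows "b \<le> norm (X * of_real Q ^ (k + N))"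
    and "norm (\<rho> (X * of_real Q ^ (k + N))) \<le> c / (a * Q ^ N) * (1 / Q) ^ k"
proof -
  have norm_eq: "norm (X * of_real Q ^ (k + N)) = norm X * Q ^ N * Q ^ k"
    using Q by (simp add: norm_mult norm_power power_add abs_of_pos)
  have "a * Q ^ N * 1 \<le> norm X * Q ^ N * Q ^ k"
    using Q X a by (intro mult_mono one_le_power) auto
  then show ge: "b \<le> norm (X * of_real Q ^ (k + N))"
    using N norm_eq by linarith
  have "norm (\<rho> (X * of_real Q ^ (k + N))) \<le> c / (norm X * Q ^ N * Q ^ k)"
    using bound[OF ge] norm_eq by simp
  also have "\<dots> \<le> c / (a * Q ^ N * Q ^ k)"
    using Q X a c by (intro divide_left_mono mult_right_mono mult_pos_pos) auto
  also have "\<dots> = c / (a * Q ^ N) * (1 / Q) ^ k"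
    by (simp add: power_one_over)
  finally show "norm (\<rho> (X * of_real Q ^ (k + N))) \<le> c / (a * Q ^ N) * (1 / Q) ^ k" .
qed

lemma summable_qseries:
  fixes \<rho> :: "complex \<Rightarrow> complex"
  assumes Q: "Q > 1" and decay: "\<rho> \<in> O[at_infinity](\<lambda>Y. 1 / Y)" and X: "X \<noteq> 0"
  shows "summable (\<lambda>k. \<rho> (X * of_real Q ^ k))"
proof -
  obtain b c where b: "b \<ge> 2" and c: "c > 0" and bound: "\<And>Y. b \<le> norm Y \<Longrightarrow> norm (\<rho> Y) \<le> c / norm Y"
    using bigo_inverse_boundE[OF decay] by blast
  obtain N where N: "b / norm X < Q ^ N"
    using real_arch_pow[OF Q] by blast
  have N': "b \<le> norm X * Q ^ N"
    using N X by (simp add: field_simps)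
  have "summable (\<lambda>k. c / (norm X * Q ^ N) * (1 / Q) ^ k)"
    using Q by (intro summable_mult summable_geometric) simp
  then have "summable (\<lambda>k. \<rho> (X * of_real Q ^ (k + N)))"
    by (rule summable_comparison_test'[where N = 0])
       (use qseries_tail_bound(2)[OF Q _ N' _ bound c] X in auto)
  then show ?thesis
    using summable_iff_shift[of "\<lambda>k. \<rho> (X * of_real Q ^ k)" N] by simp
qed

lemma field_differentiable_at_mult_const:
  fixes f :: "complex \<Rightarrow> complex"
  assumes "f field_differentiable at (X * c)"
  shows "(\<lambda>X. f (X * c)) field_differentiable at X"
proof -
  have "(\<lambda>X. X * c) field_differentiable at X"
    by (intro field_differentiable_mult field_differentiable_ident field_differentiable_const)
  from field_differentiable_compose[OF this assms] show ?thesis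
    by (simp add: o_def)
qed

lemma qseries_field_differentiable:
  fixes \<rho> :: "complex \<Rightarrow> complex"
  assumes Q: "Q > 1" and decay: "\<rho> \<in> O[at_infinity](\<lambda>Y. 1 / Y)" and hol: "\<rho> holomorphic_on - {0, 1}"
    and X0: "X0 \<noteq> 0" and orbit: "\<And>k. X0 * of_real Q ^ k \<noteq> 1"
  shows "qseries \<rho> Q field_differentiable at X0"
proof -
  obtain b c where b: "b \<ge> 2" and c: "c > 0" and bound: "\<And>Y. b \<le> norm Y \<Longrightarrow> norm (\<rho> Y) \<le> c / norm Y"
    using bigo_inverse_boundE[OF decay] by blast
  define a where "a = norm X0 / 2"
  have a: "a > 0"
    using X0 by (simp add: a_def)
  obtain N where "b / a < Q ^ N"
    using real_arch_pow[OF Q] by blast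
  then have N: "b \<le> a * Q ^ N"
    using a by (simp add: field_simps)
  have \<rho>_diff: "\<rho> field_differentiable at Y" if "Y \<noteq> 0" "Y \<noteq> 1" for Y
    using hol that by (intro holomorphic_on_imp_differentiable_at[of _ "- {0, 1}"]) auto
  define S :: "complex set" where "S = - cball 0 a"
  have tail_diff: "(\<lambda>X. \<rho> (X * of_real Q ^ (k + N))) field_differentiable at X" if "X \<in> S" for X k
  proof -
    have "2 \<le> norm (X * of_real Q ^ (k + N))"
      using qseries_tail_bound(1)[OF Q a N _ bound c, of X k] that b by (simp add: S_def)
    moreover have "Y \<noteq> 0" "Y \<noteq> 1" if "2 \<le> norm Y" for Y :: complex
      using that by auto
    ultimately show ?thesis
      by (intro field_differentiable_at_mult_const \<rho>_diff)
  qed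
  obtain g g' where g: "\<forall>X\<in>S. (\<lambda>k. \<rho> (X * of_real Q ^ (k + N))) sums g X \<and>
      (\<lambda>k. deriv (\<lambda>X. \<rho> (X * of_real Q ^ (k + N))) X) sums g' X \<and> (g has_field_derivative g' X) (at X)"
  proof (rule series_and_derivative_comparison[where h = "\<lambda>k. c / (a * Q ^ N) * (1 / Q) ^ k"])
    show "open S"
      by (simp add: S_def open_Compl)
    show "summable (\<lambda>k. c / (a * Q ^ N) * (1 / Q) ^ k)"
      using Q by (intro summable_mult summable_geometric) simp
    show "\<forall>\<^sub>F k in sequentially. \<forall>X\<in>S. norm (\<rho> (X * of_real Q ^ (k + N))) \<le> c / (a * Q ^ N) * (1 / Q) ^ k"
      using qseries_tail_bound(2)[OF Q a N _ bound c] by (simp add: S_def)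
  qed (use tail_diff field_differentiable_derivI in blast)+
  have head_diff: "(\<lambda>X. \<Sum>k<N. \<rho> (X * of_real Q ^ k)) field_differentiable at X0"
    using X0 orbit Q by (intro field_differentiable_sum field_differentiable_at_mult_const \<rho>_diff) auto
  have g_diff: "g field_differentiable at X0"
    using g X0 a by (auto simp: S_def a_def field_differentiable_def)
  have split: "(\<Sum>k<N. \<rho> (X * of_real Q ^ k)) + g X = qseries \<rho> Q X" if "dist X X0 < a" for X
  proof -
    have "norm X0 - norm X \<le> dist X X0"
      by (metis dist_commute dist_norm norm_triangle_ineq2)
    then have X: "X \<in> S" "X \<noteq> 0"
      using that a by (auto simp: S_def a_def)
    have "(\<lambda>k. \<rho> (X * of_real Q ^ (k + N))) sums g X"
      using g X by blast
    then show ?thesis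
      using suminf_split_initial_segment[OF summable_qseries[OF Q decay X(2)], of N]
      by (simp add: qseries_def sums_iff)
  qed
  show ?thesis
    by (rule field_differentiable_transform_within[OF a UNIV_I _ field_differentiable_add[OF head_diff g_diff]])
       (simp add: split)
qed

lemma qseries_mult:
  fixes \<rho> :: "complex \<Rightarrow> complex"
  assumes Q: "Q > 1" and decay: "\<rho> \<in> O[at_infinity](\<lambda>Y. 1 / Y)" and X: "X \<noteq> 0"
  shows "qseries \<rho> Q (X * of_real Q) = qseries \<rho> Q X - \<rho> X"
  using suminf_split_head[OF summable_qseries[OF assms]]
  by (simp add: qseries_def mult.assoc)

lemma cnj_qseries:
  fixes \<rho> :: "complex \<Rightarrow> complex"
  assumes Q: "Q > 1" and decay: "\<rho> \<in> O[at_infinity](\<lambda>Y. 1 / Y)" and X: "X \<noteq> 0"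
    and real: "\<And>Y. \<rho> (cnj Y) = cnj (\<rho> Y)"
  shows "qseries \<rho> Q (cnj X) = cnj (qseries \<rho> Q X)"
proof -
  have "\<rho> (cnj X * of_real Q ^ k) = cnj (\<rho> (X * of_real Q ^ k))" for k
    by (metis real complex_cnj_mult complex_cnj_complex_of_real complex_cnj_power)
  then show ?thesis
    using sums_cnj[THEN iffD2, OF summable_sums[OF summable_qseries[OF assms(1-3)]]]
    by (simp add: qseries_def sums_iff)
qed

lemma Re_suminf_signed_pos:
  fixes f :: "nat \<Rightarrow> complex"
  assumes "summable f" and "\<And>k. 0 < s * Re (f k)"
  shows "0 < s * Re (suminf f)"
proof -
  have "summable (\<lambda>k. s * Re (f k))"
    using summable_mult[OF summable_Re[OF assms(1)]] .
  then show ?thesis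
    using suminf_pos[of "\<lambda>k. s * Re (f k)"] assms
    by (simp add: Re_suminf[OF assms(1)] suminf_mult summable_Re)
qed

lemma Im_suminf_signed_pos:
  fixes f :: "nat \<Rightarrow> complex"
  assumes "summable f" and "\<And>k. 0 < s * Im (f k)"
  shows "0 < s * Im (suminf f)"
proof -
  have "summable (\<lambda>k. s * Im (f k))"
    using summable_mult[OF summable_Im[OF assms(1)]] .
  then show ?thesis
    using suminf_pos[of "\<lambda>k. s * Im (f k)"] assms
    by (simp add: Im_suminf[OF assms(1)] suminf_mult summable_Im)
qed

lemma Im_suminf_eq_0:
  fixes f :: "nat \<Rightarrow> complex"
  assumes "summable f" and "\<And>k. Im (f k) = 0"
  shows "Im (suminf f) = 0"
  using assms by (simp add: Im_suminf)

definition wp_term :: "complex \<Rightarrow> complex" where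
  "wp_term Y = Y / (Y - 1) ^ 2"

definition zeta_term :: "complex \<Rightarrow> complex" where
  "zeta_term Y = 1 / (Y - 1)"

lemma half_norm_le_norm_diff_one:
  fixes Y :: complex
  assumes "2 \<le> norm Y"
  shows "norm Y / 2 \<le> norm (Y - 1)"
  using norm_triangle_ineq2[of Y 1] assms by simp

lemma wp_term_bigo: "wp_term \<in> O[at_infinity](\<lambda>Y. 1 / Y)"
proof (intro landau_o.bigI[of 4] eventually_at_infinityI[of 2])
  fix Y :: complex
  assume Y: "2 \<le> norm Y"
  have h: "norm Y / 2 \<le> norm (Y - 1)" "0 < norm Y / 2"
    using Y half_norm_le_norm_diff_one[OF Y] by auto
  have "norm (wp_term Y) = norm Y / norm (Y - 1) ^ 2"
    by (simp add: wp_term_def norm_divide norm_power)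
  also have "\<dots> \<le> norm Y / (norm Y / 2) ^ 2"
    using h by (intro divide_left_mono power_mono mult_pos_pos zero_less_power) auto
  also have "\<dots> = 4 * norm (1 / Y)"
    using Y by (simp add: power2_eq_square norm_divide field_simps)
  finally show "norm (wp_term Y) \<le> 4 * norm (1 / Y)" .
qed simp

lemma zeta_term_bigo: "zeta_term \<in> O[at_infinity](\<lambda>Y. 1 / Y)"
proof (intro landau_o.bigI[of 2] eventually_at_infinityI[of 2])
  fix Y :: complex
  assume Y: "2 \<le> norm Y"
  have h: "norm Y / 2 \<le> norm (Y - 1)" "0 < norm Y / 2"
    using Y half_norm_le_norm_diff_one[OF Y] by auto
  have "norm (zeta_term Y) = 1 / norm (Y - 1)"
    by (simp add: zeta_term_def norm_divide)
  also have "\<dots> \<le> 1 / (norm Y / 2)"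
    using h by (intro divide_left_mono mult_pos_pos) auto
  also have "\<dots> = 2 * norm (1 / Y)"
    by (simp add: norm_divide)
  finally show "norm (zeta_term Y) \<le> 2 * norm (1 / Y)" .
qed simp

lemma wp_term_holomorphic: "wp_term holomorphic_on - {0, 1}"
  unfolding wp_term_def by (intro holomorphic_intros) auto

lemma zeta_term_holomorphic: "zeta_term holomorphic_on - {0, 1}"
  unfolding zeta_term_def by (intro holomorphic_intros) auto

lemma wp_term_inverse: "wp_term (1 / Y) = wp_term Y"
  by (cases "Y = 0") (simp_all add: wp_term_def field_simps power2_eq_square)

lemma zeta_term_inverse: "Y \<noteq> 0 \<Longrightarrow> Y \<noteq> 1 \<Longrightarrow> zeta_term (1 / Y) = - 1 - zeta_term Y"
  by (simp add: zeta_term_def field_simps)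

text \<open>Multiplicative analogues of the Weierstrass functions: as functions of \<open>log X\<close> they are
  invariant (resp. shifted by 1) under \<open>X \<mapsto> Q X\<close>, with a double (resp. simple) pole at \<open>X = 1\<close>.\<close>

definition q_wp :: "real \<Rightarrow> complex \<Rightarrow> complex" where
  "q_wp Q X = qseries wp_term Q X + qseries wp_term Q (of_real Q / X)"

definition q_zeta :: "real \<Rightarrow> complex \<Rightarrow> complex" where
  "q_zeta Q X = qseries zeta_term Q X - qseries zeta_term Q (of_real Q / X)"

lemma q_wp_mult:
  assumes Q: "Q > 1" and X: "X \<noteq> 0"
  shows "q_wp Q (X * of_real Q) = q_wp Q X"
proof -
  have "qseries wp_term Q (of_real Q / X) = qseries wp_term Q (1 / X) - wp_term X"
    using qseries_mult[OF Q wp_term_bigo, of "1 / X"] X by (simp add: wp_term_inverse)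
  then show ?thesis
    using qseries_mult[OF Q wp_term_bigo X] Q X by (simp add: q_wp_def)
qed

lemma q_zeta_mult:
  assumes Q: "Q > 1" and X: "X \<noteq> 0" "X \<noteq> 1"
  shows "q_zeta Q (X * of_real Q) = q_zeta Q X + 1"
proof -
  have "qseries zeta_term Q (of_real Q / X) = qseries zeta_term Q (1 / X) + 1 + zeta_term X"
    using qseries_mult[OF Q zeta_term_bigo, of "1 / X"] X by (simp add: zeta_term_inverse)
  then show ?thesis
    using qseries_mult[OF Q zeta_term_bigo X(1)] Q X by (simp add: q_zeta_def)
qed

lemma qseries_field_differentiable_off_powers:
  fixes \<rho> :: "complex \<Rightarrow> complex"
  assumes Q: "Q > 1" and decay: "\<rho> \<in> O[at_infinity](\<lambda>Y. 1 / Y)" and hol: "\<rho> holomorphic_on - {0, 1}"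
    and X: "X \<noteq> 0" and powers: "\<And>k::int. X \<noteq> of_real (Q powi k)"
  shows "qseries \<rho> Q field_differentiable at X"
    and "(\<lambda>X. qseries \<rho> Q (of_real Q / X)) field_differentiable at X"
proof -
  show "qseries \<rho> Q field_differentiable at X"
  proof (rule qseries_field_differentiable[OF Q decay hol X])
    fix k
    show "X * of_real Q ^ k \<noteq> 1"
      using powers[of "- int k"] Q by (auto simp: power_int_minus field_simps)
  qed
  have "qseries \<rho> Q field_differentiable at (of_real Q / X)"
  proof (rule qseries_field_differentiable[OF Q decay hol])
    show "of_real Q / X \<noteq> 0"
      using Q X by simp
    fix k
    show "of_real Q / X * of_real Q ^ k \<noteq> 1"
      using powers[of "int k + 1"] Q X by (auto simp: power_int_add field_simps)
  qed
  moreover have "(\<lambda>X. of_real Q / X) field_differentiable at X"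
    using X by (intro derivative_intros) auto
  ultimately show "(\<lambda>X. qseries \<rho> Q (of_real Q / X)) field_differentiable at X"
    using field_differentiable_compose by (auto simp: o_def)
qed

lemma q_wp_field_differentiable:
  "Q > 1 \<Longrightarrow> X \<noteq> 0 \<Longrightarrow> (\<And>k::int. X \<noteq> of_real (Q powi k)) \<Longrightarrow> q_wp Q field_differentiable at X"
  unfolding q_wp_def[abs_def]
  by (intro field_differentiable_add qseries_field_differentiable_off_powers wp_term_bigo wp_term_holomorphic)

lemma q_zeta_field_differentiable:
  "Q > 1 \<Longrightarrow> X \<noteq> 0 \<Longrightarrow> (\<And>k::int. X \<noteq> of_real (Q powi k)) \<Longrightarrow> q_zeta Q field_differentiable at X"
  unfolding q_zeta_def[abs_def]
  by (intro field_differentiable_diff qseries_field_differentiable_off_powers zeta_term_bigo zeta_term_holomorphic)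

lemma qseries_isCont_at_one:
  fixes \<rho> :: "complex \<Rightarrow> complex"
  assumes Q: "Q > 1" and decay: "\<rho> \<in> O[at_infinity](\<lambda>Y. 1 / Y)" and hol: "\<rho> holomorphic_on - {0, 1}"
  shows "isCont (\<lambda>X. qseries \<rho> Q (X * of_real Q)) 1"
    and "isCont (\<lambda>X. qseries \<rho> Q (of_real Q / X)) 1"
proof -
  have "qseries \<rho> Q field_differentiable at (of_real Q)"
  proof (rule qseries_field_differentiable[OF Q decay hol])
    fix k
    have "1 < Q ^ Suc k"
      using Q by (intro one_less_power) auto
    then show "of_real Q * of_real Q ^ k \<noteq> (1 :: complex)"
      by (metis less_irrefl of_real_eq_1_iff of_real_power power_Suc)
  qed (use Q in simp)
  then have cont: "isCont (qseries \<rho> Q) (of_real Q)"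
    by (rule field_differentiable_imp_continuous_at)
  have "isCont (\<lambda>X. X * of_real Q) (1 :: complex)" "isCont (\<lambda>X. of_real Q / X) (1 :: complex)"
    by (auto intro!: continuous_intros)
  with cont show "isCont (\<lambda>X. qseries \<rho> Q (X * of_real Q)) 1"
    and "isCont (\<lambda>X. qseries \<rho> Q (of_real Q / X)) 1"
    by (auto intro: isCont_o2)
qed

lemma q_wp_pole_part:
  assumes Q: "Q > 1"
  obtains R where "isCont R 1" "\<And>X. X \<noteq> 0 \<Longrightarrow> q_wp Q X = wp_term X + R X"
proof
  show "isCont (\<lambda>X. qseries wp_term Q (X * of_real Q) + qseries wp_term Q (of_real Q / X)) 1"
    using qseries_isCont_at_one[OF Q wp_term_bigo wp_term_holomorphic] by (rule continuous_add)
  show "q_wp Q X = wp_term X + (qseries wp_term Q (X * of_real Q) + qseries wp_term Q (of_real Q / X))"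
    if "X \<noteq> 0" for X
    using qseries_mult[OF Q wp_term_bigo that] by (simp add: q_wp_def)
qed

lemma q_zeta_pole_part:
  assumes Q: "Q > 1"
  obtains R where "isCont R 1" "\<And>X. X \<noteq> 0 \<Longrightarrow> q_zeta Q X = zeta_term X + R X"
proof
  show "isCont (\<lambda>X. qseries zeta_term Q (X * of_real Q) - qseries zeta_term Q (of_real Q / X)) 1"
    using qseries_isCont_at_one[OF Q zeta_term_bigo zeta_term_holomorphic] by (rule continuous_diff)
  show "q_zeta Q X = zeta_term X + (qseries zeta_term Q (X * of_real Q) - qseries zeta_term Q (of_real Q / X))"
    if "X \<noteq> 0" for X
    using qseries_mult[OF Q zeta_term_bigo that] by (simp add: q_zeta_def)
qed

lemma qseries_wp_term_real:
  assumes Q: "Q > 1" and x: "x \<noteq> 0" and orbit: "\<And>k. x * Q ^ k \<noteq> 1"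
  shows "Im (qseries wp_term Q (of_real x)) = 0" and "0 < x * Re (qseries wp_term Q (of_real x))"
proof -
  have summ: "summable (\<lambda>k. wp_term (of_real x * of_real Q ^ k))"
    using summable_qseries[OF Q wp_term_bigo] x by simp
  have "wp_term (of_real x * of_real Q ^ k) = of_real (x * Q ^ k / (x * Q ^ k - 1) ^ 2)" for k
    by (simp add: wp_term_def)
  moreover have "0 < x * (x * Q ^ k / (x * Q ^ k - 1) ^ 2)" for k
  proof -
    have "0 < x\<^sup>2 * Q ^ k"
      using x Q by simp
    moreover have "0 < (x * Q ^ k - 1) ^ 2"
      using orbit[of k] by simp
    ultimately show ?thesis
      using divide_pos_pos by (simp add: power2_eq_square mult.assoc)
  qed
  ultimately show "Im (qseries wp_term Q (of_real x)) = 0" "0 < x * Re (qseries wp_term Q (of_real x))"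
    unfolding qseries_def using summ
    by (auto intro: Im_suminf_eq_0 Re_suminf_signed_pos simp del: of_real_power)
qed

lemma q_wp_real:
  assumes Q: "Q > 1" and x: "x \<noteq> 0" and powers: "\<And>k::int. x \<noteq> Q powi k"
  shows "Im (q_wp Q (of_real x)) = 0" and "0 < x * Re (q_wp Q (of_real x))"
proof -
  have orbit1: "x * Q ^ k \<noteq> 1" for k
    using powers[of "- int k"] Q by (auto simp: power_int_minus field_simps)
  have orbit2: "Q / x * Q ^ k \<noteq> 1" for k
    using powers[of "int k + 1"] Q x by (auto simp: power_int_add field_simps)
  have Qx: "Q / x \<noteq> 0"
    using Q x by simp
  note A = qseries_wp_term_real[OF Q x orbit1] and B = qseries_wp_term_real[OF Q Qx orbit2]
  have "0 < (x\<^sup>2 / Q) * (Q / x * Re (qseries wp_term Q (of_real (Q / x))))"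
    using Q x by (intro mult_pos_pos[OF _ B(2)]) simp
  also have "\<dots> = x * Re (qseries wp_term Q (of_real Q / of_real x))"
    using Q x by (simp add: field_simps power2_eq_square)
  finally have "0 < x * Re (qseries wp_term Q (of_real Q / of_real x))" .
  then show "Im (q_wp Q (of_real x)) = 0" "0 < x * Re (q_wp Q (of_real x))"
    using A B by (simp_all add: q_wp_def distrib_left)
qed

lemma Im_zeta_term: "Im (zeta_term Y) = - Im Y / (norm (Y - 1))\<^sup>2"
  by (simp add: zeta_term_def Im_divide')

lemma qseries_zeta_term_Im:
  assumes Q: "Q > 1" and X: "Im X \<noteq> 0"
  shows "0 < - Im X * Im (qseries zeta_term Q X)"
proof -
  have "X \<noteq> 0"
    using X by auto
  then have summ: "summable (\<lambda>k. zeta_term (X * of_real Q ^ k))"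
    by (rule summable_qseries[OF Q zeta_term_bigo])
  have "0 < - Im X * Im (zeta_term (X * of_real Q ^ k))" for k
  proof -
    have Im: "Im (X * of_real Q ^ k) = Im X * Q ^ k"
      by (simp flip: of_real_power)
    then have "X * of_real Q ^ k \<noteq> 1"
      using X Q by (auto dest: arg_cong[of _ _ Im])
    then have "0 < (norm (X * of_real Q ^ k - 1))\<^sup>2"
      by simp
    moreover have "0 < (Im X)\<^sup>2 * Q ^ k"
      using X Q by simp
    ultimately show ?thesis
      using divide_pos_pos by (simp add: Im_zeta_term Im power2_eq_square mult.assoc)
  qed
  then show ?thesis
    unfolding qseries_def using summ by (rule Im_suminf_signed_pos[rotated])
qed

lemma Im_q_zeta:
  assumes Q: "Q > 1" and X: "Im X \<noteq> 0"
  shows "Im X * Im (q_zeta Q X) < 0"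
proof -
  have X0: "X \<noteq> 0"
    using X by auto
  have Im_inv: "Im (of_real Q / X) = - (Q / (norm X)\<^sup>2) * Im X"
    by (simp add: Im_divide')
  have pos: "0 < Q / (norm X)\<^sup>2"
    using Q X0 by simp
  have "Im (of_real Q / X) \<noteq> 0"
    using X Q X0 by (simp add: Im_inv)
  then have "0 < - Im (of_real Q / X) * Im (qseries zeta_term Q (of_real Q / X))"
    by (rule qseries_zeta_term_Im[OF Q])
  also have "\<dots> = Q / (norm X)\<^sup>2 * (Im X * Im (qseries zeta_term Q (of_real Q / X)))"
    unfolding Im_inv by (simp only: mult_minus_left minus_minus mult.assoc)
  finally have "0 < Im X * Im (qseries zeta_term Q (of_real Q / X))"
    using pos zero_less_mult_pos by blast
  then show ?thesis
    using qseries_zeta_term_Im[OF Q X] by (simp add: q_zeta_def algebra_simps)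
qed

lemma q_zeta_cnj:
  assumes Q: "Q > 1" and X: "X \<noteq> 0"
  shows "q_zeta Q (cnj X) = cnj (q_zeta Q X)"
proof -
  have real: "zeta_term (cnj Y) = cnj (zeta_term Y)" for Y
    by (simp add: zeta_term_def)
  have "qseries zeta_term Q (cnj (of_real Q / X)) = cnj (qseries zeta_term Q (of_real Q / X))"
    by (rule cnj_qseries[OF Q zeta_term_bigo _ real]) (use Q X in simp)
  then show ?thesis
    using cnj_qseries[OF Q zeta_term_bigo X real] by (simp add: q_zeta_def)
qed

lemma pole_order_le_iff:
  "pole_order_le f a n \<longleftrightarrow>
     (\<exists>g. g analytic_on {a} \<and> eventually (\<lambda>z. f z = g z / (z - a) ^ n) (at a))"
proof
  assume "pole_order_le f a n"
  then obtain r g where r: "r > 0" and g: "g holomorphic_on ball a r"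
    and eq: "\<forall>z\<in>ball a r - {a}. f z = g z / (z - a) ^ n"
    unfolding pole_order_le_def by blast
  have "g analytic_on {a}"
    using r g analytic_at_ball by blast
  moreover have "eventually (\<lambda>z. f z = g z / (z - a) ^ n) (at a)"
    unfolding eventually_at using r eq by (intro exI[of _ r]) (auto simp: dist_commute)
  ultimately show "\<exists>g. g analytic_on {a} \<and> eventually (\<lambda>z. f z = g z / (z - a) ^ n) (at a)"
    by blast
next
  assume "\<exists>g. g analytic_on {a} \<and> eventually (\<lambda>z. f z = g z / (z - a) ^ n) (at a)"
  then obtain g r1 r2 where r1: "r1 > 0" "g holomorphic_on ball a r1"
    and r2: "r2 > 0" "\<And>z. z \<noteq> a \<Longrightarrow> dist z a < r2 \<Longrightarrow> f z = g z / (z - a) ^ n"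
    unfolding analytic_at_ball eventually_at by blast
  have "g holomorphic_on ball a (min r1 r2)"
    using r1(2) by (rule holomorphic_on_subset) auto
  moreover have "\<forall>z\<in>ball a (min r1 r2) - {a}. f z = g z / (z - a) ^ n"
    using r2(2) by (auto simp: dist_commute)
  ultimately show "pole_order_le f a n"
    unfolding pole_order_le_def using r1(1) r2(1) by (intro exI[of _ "min r1 r2"]) auto
qed

lemma pole_order_leE:
  assumes "pole_order_le f a n"
  obtains g where "g analytic_on {a}" "eventually (\<lambda>z. f z = g z / (z - a) ^ n) (at a)"
  using assms unfolding pole_order_le_iff by blast

lemma pole_order_le_cong:
  assumes "eventually (\<lambda>z. f z = g z) (at a)" and "pole_order_le f a n"
  shows "pole_order_le g a n"
proof -
  obtain G where G: "G analytic_on {a}" "eventually (\<lambda>z. f z = G z / (z - a) ^ n) (at a)"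
    using assms(2) by (rule pole_order_leE)
  from G(2) assms(1) have "eventually (\<lambda>z. g z = G z / (z - a) ^ n) (at a)"
    by eventually_elim simp
  with G(1) show ?thesis
    unfolding pole_order_le_iff by blast
qed

lemma analytic_imp_pole_order_le:
  assumes "f analytic_on {a}"
  shows "pole_order_le f a n"
proof -
  have "(\<lambda>z. f z * (z - a) ^ n) analytic_on {a}"
    using assms by (intro analytic_intros)
  moreover have "eventually (\<lambda>z. z \<noteq> a) (at a)"
    by (simp add: eventually_at_filter)
  then have "eventually (\<lambda>z. f z = f z * (z - a) ^ n / (z - a) ^ n) (at a)"
    by eventually_elim simp
  ultimately show ?thesis
    unfolding pole_order_le_iff by blast
qed

lemma pole_order_le_mult:
  assumes "pole_order_le f a n" and "h analytic_on {a}"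
  shows "pole_order_le (\<lambda>z. f z * h z) a n"
proof -
  obtain G where G: "G analytic_on {a}" "eventually (\<lambda>z. f z = G z / (z - a) ^ n) (at a)"
    using assms(1) by (rule pole_order_leE)
  from G(2) have "eventually (\<lambda>z. f z * h z = G z * h z / (z - a) ^ n) (at a)"
    by eventually_elim simp
  moreover have "(\<lambda>z. G z * h z) analytic_on {a}"
    using G(1) assms(2) by (intro analytic_intros)
  ultimately show ?thesis
    unfolding pole_order_le_iff by blast
qed

lemma pole_order_le_diff:
  assumes "pole_order_le f a n" and "pole_order_le g a n"
  shows "pole_order_le (\<lambda>z. f z - g z) a n"
proof -
  obtain F where F: "F analytic_on {a}" "eventually (\<lambda>z. f z = F z / (z - a) ^ n) (at a)"
    using assms(1) by (rule pole_order_leE)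
  obtain G where G: "G analytic_on {a}" "eventually (\<lambda>z. g z = G z / (z - a) ^ n) (at a)"
    using assms(2) by (rule pole_order_leE)
  from F(2) G(2) have "eventually (\<lambda>z. f z - g z = (F z - G z) / (z - a) ^ n) (at a)"
    by eventually_elim (simp add: diff_divide_distrib)
  moreover have "(\<lambda>z. F z - G z) analytic_on {a}"
    using F(1) G(1) by (intro analytic_intros)
  ultimately show ?thesis
    unfolding pole_order_le_iff by blast
qed

lemma pole_order_le_tendsto:
  assumes "pole_order_le f a n"
  obtains c where "((\<lambda>z. (z - a) ^ n * f z) \<longlongrightarrow> c) (at a)"
proof -
  obtain G where G: "G analytic_on {a}" "eventually (\<lambda>z. f z = G z / (z - a) ^ n) (at a)"
    using assms by (rule pole_order_leE)
  have "eventually (\<lambda>z. z \<noteq> a) (at a)"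
    by (simp add: eventually_at_filter)
  with G(2) have "eventually (\<lambda>z. G z = (z - a) ^ n * f z) (at a)"
    by eventually_elim simp
  moreover have "(G \<longlongrightarrow> G a) (at a)"
    using G(1) by (simp add: analytic_at_imp_isCont isContD)
  ultimately show ?thesis
    by (auto intro: that simp: tendsto_cong)
qed

lemma analytic_factor_zero:
  assumes "g analytic_on {a}" and "g a = 0"
  obtains k where "k analytic_on {a}" "\<And>z. g z = (z - a) * k z"
proof -
  define k where "k z = (if z = a then deriv g a else (g z - g a) / (z - a))" for z
  obtain r where r: "r > 0" "g holomorphic_on ball a r"
    using assms(1) analytic_at_ball by blast
  have "k holomorphic_on ball a r"
    using pole_lemma_open[OF r(2) open_ball, of a] by (simp add: k_def[abs_def])
  then have "k analytic_on {a}"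
    using r(1) analytic_at_ball by blast
  moreover have "g z = (z - a) * k z" for z
    using assms(2) by (simp add: k_def)
  ultimately show ?thesis
    using that by blast
qed

lemma pole_order_le_lower:
  assumes "pole_order_le f a (Suc m)" and "((\<lambda>z. (z - a) ^ Suc m * f z) \<longlongrightarrow> 0) (at a)"
  shows "pole_order_le f a m"
proof -
  obtain G where G: "G analytic_on {a}" "eventually (\<lambda>z. f z = G z / (z - a) ^ Suc m) (at a)"
    using assms(1) by (rule pole_order_leE)
  have ne: "eventually (\<lambda>z. z \<noteq> a) (at a)"
    by (simp add: eventually_at_filter)
  with G(2) have "eventually (\<lambda>z. (z - a) ^ Suc m * f z = G z) (at a)"
    by eventually_elim simp
  then have "(G \<longlongrightarrow> 0) (at a)"
    using assms(2) by (simp add: tendsto_cong)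
  moreover have "(G \<longlongrightarrow> G a) (at a)"
    using G(1) by (simp add: analytic_at_imp_isCont isContD)
  ultimately have "G a = 0"
    using tendsto_unique[OF at_neq_bot] by blast
  then obtain K where K: "K analytic_on {a}" "\<And>z. G z = (z - a) * K z"
    using analytic_factor_zero[OF G(1)] by blast
  from G(2) ne have "eventually (\<lambda>z. f z = K z / (z - a) ^ m) (at a)"
    by eventually_elim (simp add: K(2))
  with K(1) show ?thesis
    unfolding pole_order_le_iff by blast
qed

lemma simple_zero_atI:
  assumes "k analytic_on {z}" and "k z \<noteq> 0" and "eventually (\<lambda>u. f u = (u - z) * k u) (at z)"
  shows "simple_zero_at f z"
proof -
  obtain r1 where r1: "r1 > 0" "k holomorphic_on ball z r1"
    using assms(1) analytic_at_ball by blast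
  obtain r2 where r2: "r2 > 0" "\<And>u. u \<noteq> z \<Longrightarrow> dist u z < r2 \<Longrightarrow> f u = (u - z) * k u"
    using assms(3) unfolding eventually_at by blast
  have "k holomorphic_on ball z (min r1 r2)"
    using r1(2) by (rule holomorphic_on_subset) auto
  moreover have "\<forall>u\<in>ball z (min r1 r2) - {z}. f u = (u - z) * k u"
    using r2(2) by (auto simp: dist_commute)
  ultimately show ?thesis
    unfolding simple_zero_at_def using r1(1) r2(1) assms(2) by (intro exI[of _ "min r1 r2"]) auto
qed

lemma double_zero_factor:
  assumes pole: "pole_order_le f z 1" and zero: "is_zero_at f z" and not_simple: "\<not> simple_zero_at f z"
  obtains q where "q analytic_on {z}" "eventually (\<lambda>u. f u = (u - z) ^ 2 * q u) (at z)"
proof -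
  have "((\<lambda>u. (u - z) ^ Suc 0 * f u) \<longlongrightarrow> (z - z) ^ Suc 0 * 0) (at z)"
    using zero unfolding is_zero_at_def by (intro tendsto_intros)
  then have "pole_order_le f z 0"
    using pole_order_le_lower[of f z 0] pole by simp
  then obtain G where G: "G analytic_on {z}" "eventually (\<lambda>u. f u = G u) (at z)"
    by (auto elim: pole_order_leE)
  have "(G \<longlongrightarrow> 0) (at z)"
    using zero G(2) unfolding is_zero_at_def by (simp add: tendsto_cong)
  moreover have "(G \<longlongrightarrow> G z) (at z)"
    using G(1) by (simp add: analytic_at_imp_isCont isContD)
  ultimately have "G z = 0"
    using tendsto_unique[OF at_neq_bot] by blast
  then obtain k where k: "k analytic_on {z}" "\<And>u. G u = (u - z) * k u"
    using analytic_factor_zero[OF G(1)] by blast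
  have ev: "eventually (\<lambda>u. f u = (u - z) * k u) (at z)"
    using G(2) by (simp add: k(2))
  have "k z = 0"
    using simple_zero_atI[OF k(1) _ ev] not_simple by blast
  then obtain q where q: "q analytic_on {z}" "\<And>u. k u = (u - z) * q u"
    using analytic_factor_zero[OF k(1)] by blast
  from ev have "eventually (\<lambda>u. f u = (u - z) ^ 2 * q u) (at z)"
    by eventually_elim (simp add: q(2) power2_eq_square)
  with q(1) show ?thesis
    using that by blast
qed

lemma tendsto_mult_factor:
  fixes f q h :: "complex \<Rightarrow> complex"
  assumes "eventually (\<lambda>u. f u = (u - z) ^ m * q u) (at z)" and "isCont q z"
    and "((\<lambda>u. (u - z) ^ m * h u) \<longlongrightarrow> c) (at z)"
  shows "((\<lambda>u. f u * h u) \<longlongrightarrow> q z * c) (at z)"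
proof -
  have "((\<lambda>u. q u * ((u - z) ^ m * h u)) \<longlongrightarrow> q z * c) (at z)"
    using tendsto_mult[OF assms(2)[unfolded isCont_def] assms(3)] .
  moreover from assms(1) have "eventually (\<lambda>u. q u * ((u - z) ^ m * h u) = f u * h u) (at z)"
    by eventually_elim simp
  ultimately show ?thesis
    by (simp add: tendsto_cong)
qed

lemma tendsto_at_shift:
  fixes f :: "complex \<Rightarrow> complex"
  assumes "eventually (\<lambda>u. f (u + c) = f u) (at x)" and "(f \<longlongrightarrow> L) (at x)"
  shows "(f \<longlongrightarrow> L) (at (x + c))"
proof -
  have "((\<lambda>u. f (u + c)) \<longlongrightarrow> L) (at x)"
    using tendsto_cong[OF assms(1)] assms(2) by simp
  from LIM_offset[OF this, of "- c"] show ?thesis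
    by simp
qed

lemma remove_sings_shift:
  assumes "eventually (\<lambda>u. f (u + c) = f u) (at x)"
  shows "remove_sings f (x + c) = remove_sings f x"
proof -
  have "eventually (\<lambda>w. f (x + c + w) = f (x + w)) (at 0)"
    using assms by (simp add: at_to_0[of x] eventually_filtermap add_ac)
  then have "remove_sings (\<lambda>w. f (x + c + w)) 0 = remove_sings (\<lambda>w. f (x + w)) 0"
    by (rule remove_sings_cong) simp
  then show ?thesis
    using remove_sings_shift_0[of f "x + c"] remove_sings_shift_0[of f x] by simp
qed

definition lattice_coset :: "complex \<Rightarrow> complex \<Rightarrow> complex set" where
  "lattice_coset \<tau> a = {p. p - a \<in> lattice \<tau>}"

lemma pole_set_eq_cosets: "pole_set \<tau> d = lattice_coset \<tau> 0 \<union> lattice_coset \<tau> (of_real d)"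
proof -
  have "(\<lambda>l. of_real d + l) ` lattice \<tau> = lattice_coset \<tau> (of_real d)"
  proof (intro equalityI subsetI)
    fix p
    assume "p \<in> lattice_coset \<tau> (of_real d)"
    then show "p \<in> (\<lambda>l. of_real d + l) ` lattice \<tau>"
      by (intro rev_image_eqI[of "p - of_real d"]) (auto simp: lattice_coset_def)
  qed (auto simp: lattice_coset_def)
  then show ?thesis
    by (simp add: pole_set_def lattice_coset_def)
qed

lemma periodic_int_multiple:
  assumes T: "\<And>p. p + c \<in> T \<longleftrightarrow> p \<in> T" and per: "\<And>p. p \<in> T \<Longrightarrow> f (p + c) = f p"
    and p: "p \<in> T"
  shows "p + of_int m * c \<in> T \<and> f (p + of_int m * c) = f p"
proof (induction m rule: int_induct[where k = 0])
  case (step1 i)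
  have eq: "p + of_int (i + 1) * c = (p + of_int i * c) + c"
    by (simp add: algebra_simps)
  show ?case
    unfolding eq using step1.IH T per by metis
next
  case (step2 i)
  have eq: "p + of_int i * c = (p + of_int (i - 1) * c) + c"
    by (simp add: algebra_simps)
  then have "p + of_int (i - 1) * c \<in> T"
    using step2.IH T by metis
  then show ?case
    using step2.IH per eq by metis
qed (simp add: p)

definition reflect :: "(complex \<Rightarrow> complex) \<Rightarrow> complex \<Rightarrow> complex" where
  "reflect f p = cnj (f (cnj p))"

lemma filterlim_cnj_at: "filterlim cnj (at (cnj a)) (at a)"
proof -
  have "(cnj \<longlongrightarrow> cnj a) (at a)"
    by (simp add: lim_cnj)
  moreover have "eventually (\<lambda>z. cnj z \<noteq> cnj a) (at a)"
    by (simp add: eventually_at_filter)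
  ultimately show ?thesis
    by (simp add: filterlim_at)
qed

lemma holomorphic_on_reflect:
  assumes f: "f holomorphic_on S" and S: "open S"
  shows "reflect f holomorphic_on cnj -` S"
proof -
  have op: "open (cnj -` S)"
    using S by (intro continuous_open_vimage) (auto intro: continuous_intros)
  have "(reflect f has_field_derivative cnj (deriv f (cnj x))) (at x)" if "cnj x \<in> S" for x
  proof -
    have "(f has_field_derivative deriv f (cnj x)) (at (cnj x))"
      using f S that by (auto intro: holomorphic_derivI)
    from has_field_derivative_cnj_cnj[OF this] show ?thesis
      by (simp add: reflect_def[abs_def] o_def)
  qed
  then show ?thesis
    using op by (auto simp: holomorphic_on_open field_differentiable_def)
qed

lemma pole_order_le_reflect:
  assumes "pole_order_le f (cnj a) m"
  shows "pole_order_le (reflect f) a m"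
proof -
  obtain g where g: "g analytic_on {cnj a}" "eventually (\<lambda>z. f z = g z / (z - cnj a) ^ m) (at (cnj a))"
    using assms by (rule pole_order_leE)
  obtain r where r: "r > 0" "g holomorphic_on ball (cnj a) r"
    using g(1) analytic_at_ball by blast
  have "cnj -` ball (cnj a) r = ball a r"
    by (auto simp: dist_norm simp flip: complex_cnj_diff)
  then have "reflect g holomorphic_on ball a r"
    using holomorphic_on_reflect[OF r(2) open_ball] by simp
  then have "reflect g analytic_on {a}"
    using r(1) analytic_at_ball by blast
  moreover have "eventually (\<lambda>z. reflect f z = reflect g z / (z - a) ^ m) (at a)"
    using filterlim_iff[THEN iffD1, OF filterlim_cnj_at, rule_format, OF g(2)]
    by eventually_elim (simp add: reflect_def)
  ultimately show ?thesis
    unfolding pole_order_le_iff by blast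
qed

lemma isolated_singularity_at_discrete:
  assumes "eventually (\<lambda>u. u \<notin> S) (at x)" and "\<And>u. u \<notin> S \<Longrightarrow> g analytic_on {u}"
  shows "isolated_singularity_at g x"
proof -
  obtain r where "r > 0" "\<And>u. u \<noteq> x \<Longrightarrow> dist u x < r \<Longrightarrow> u \<notin> S"
    using assms(1) unfolding eventually_at by blast
  then have "g analytic_on ball x r - {x}"
    using assms(2) by (intro analytic_on_analytic_at[THEN iffD2]) (auto simp: dist_commute)
  with \<open>r > 0\<close> show ?thesis
    unfolding isolated_singularity_at_def by blast
qed

lemma remove_sings_analytic_at_discrete:
  assumes "eventually (\<lambda>u. u \<notin> S) (at x)" and "\<And>u. u \<notin> S \<Longrightarrow> g analytic_on {u}"
    and "(g \<longlongrightarrow> c) (at x)"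
  shows "remove_sings g analytic_on {x}"
  using remove_sings_analytic_at[OF isolated_singularity_at_discrete[OF assms(1,2)] assms(3)] .

definition lattice_cosets :: "complex \<Rightarrow> complex set \<Rightarrow> complex set" where
  "lattice_cosets \<tau> A = (\<Union>a\<in>A. lattice_coset \<tau> a)"

locale rect_lattice =
  fixes \<tau> :: complex and t :: real
  assumes tau_eq: "\<tau> = \<i> * of_real t" and t_pos: "t > 0"
begin

lemma mem_lattice_iff: "u \<in> lattice \<tau> \<longleftrightarrow> Re u \<in> \<int> \<and> Im u / t \<in> \<int>"
proof
  assume "u \<in> lattice \<tau>"
  then obtain m k where "u = of_int m + of_int k * \<tau>"
    by (auto simp: lattice_def)
  then show "Re u \<in> \<int> \<and> Im u / t \<in> \<int>"
    using t_pos by (simp add: tau_eq)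
next
  assume "Re u \<in> \<int> \<and> Im u / t \<in> \<int>"
  then obtain m k where m: "Re u = of_int m" and k: "Im u / t = of_int k"
    by (auto elim!: Ints_cases)
  have "u = of_int m + of_int k * \<tau>"
    using m k t_pos by (simp add: complex_eq_iff tau_eq field_simps)
  then show "u \<in> lattice \<tau>"
    by (auto simp: lattice_def)
qed

lemma lattice_intro: "of_int m + of_int k * \<tau> \<in> lattice \<tau>"
  by (auto simp: lattice_def)

lemma lattice_0: "0 \<in> lattice \<tau>" and lattice_1: "1 \<in> lattice \<tau>" and lattice_tau: "\<tau> \<in> lattice \<tau>"
  using lattice_intro[of 0 0] lattice_intro[of 1 0] lattice_intro[of 0 1] by simp_all

lemma lattice_add: "u \<in> lattice \<tau> \<Longrightarrow> v \<in> lattice \<tau> \<Longrightarrow> u + v \<in> lattice \<tau>"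
  unfolding mem_lattice_iff by (auto simp: add_divide_distrib)

lemma lattice_uminus: "u \<in> lattice \<tau> \<Longrightarrow> - u \<in> lattice \<tau>"
  unfolding mem_lattice_iff by auto

lemma lattice_diff: "u \<in> lattice \<tau> \<Longrightarrow> v \<in> lattice \<tau> \<Longrightarrow> u - v \<in> lattice \<tau>"
  using lattice_add[of u "- v"] lattice_uminus[of v] by simp

lemma lattice_cnj: "u \<in> lattice \<tau> \<Longrightarrow> cnj u \<in> lattice \<tau>"
  unfolding mem_lattice_iff by auto

lemma closed_lattice: "closed (lattice \<tau>)"
proof -
  have "lattice \<tau> = Re -` \<int> \<inter> (\<lambda>u. Im u / t) -` \<int>"
    by (auto simp: mem_lattice_iff)
  moreover have "isCont (\<lambda>u. Im u / t) x" "isCont Re x" for x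
    using t_pos by (auto intro!: continuous_intros continuous_Im[OF continuous_ident]
        continuous_Re[OF continuous_ident])
  ultimately show ?thesis
    by (auto intro!: closed_Int continuous_closed_vimage closed_Ints)
qed

lemma lattice_norm_ge:
  assumes u: "u \<in> lattice \<tau>" and "u \<noteq> 0"
  shows "min 1 t \<le> norm u"
proof (cases "Re u = 0")
  case True
  then have "Im u / t \<in> \<int>" "Im u / t \<noteq> 0"
    using u \<open>u \<noteq> 0\<close> t_pos by (auto simp: mem_lattice_iff complex_eq_iff)
  then have "1 \<le> \<bar>Im u / t\<bar>"
    by (metis Ints_cases of_int_0 of_int_1_le_iff of_int_abs zero_less_abs_iff int_one_le_iff_zero_less)
  then have "t \<le> \<bar>Im u\<bar>"
    using t_pos by (simp add: abs_divide le_divide_eq)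
  then show ?thesis
    using abs_Im_le_cmod[of u] by linarith
next
  case False
  then have "Re u \<in> \<int>" "Re u \<noteq> 0"
    using u by (auto simp: mem_lattice_iff)
  then have "1 \<le> \<bar>Re u\<bar>"
    by (metis Ints_cases of_int_0 of_int_1_le_iff of_int_abs zero_less_abs_iff int_one_le_iff_zero_less)
  then show ?thesis
    using abs_Re_le_cmod[of u] by linarith
qed

lemma lattice_periodic:
  assumes T: "\<And>p l. l \<in> lattice \<tau> \<Longrightarrow> p + l \<in> T \<longleftrightarrow> p \<in> T"
    and per: "\<And>p. p \<in> T \<Longrightarrow> f (p + 1) = f p \<and> f (p + \<tau>) = f p"
    and p: "p \<in> T" and l: "l \<in> lattice \<tau>"
  shows "f (p + l) = f p"
proof -
  obtain m k where l_eq: "l = of_int m + of_int k * \<tau>"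
    using l by (auto simp: lattice_def)
  have step_tau: "p + of_int k * \<tau> \<in> T \<and> f (p + of_int k * \<tau>) = f p"
    by (rule periodic_int_multiple[OF T[OF lattice_tau] _ p]) (use per in blast)
  have "f (p + of_int k * \<tau> + of_int m * 1) = f (p + of_int k * \<tau>)"
    by (rule periodic_int_multiple[OF T[OF lattice_1], THEN conjunct2]) (use per step_tau in blast)+
  then show ?thesis
    using step_tau by (simp add: l_eq add_ac)
qed

lemma lattice_coset_add:
  assumes l: "l \<in> lattice \<tau>"
  shows "p + l \<in> lattice_coset \<tau> a \<longleftrightarrow> p \<in> lattice_coset \<tau> a"
proof
  assume "p + l \<in> lattice_coset \<tau> a"
  then show "p \<in> lattice_coset \<tau> a"
    using lattice_diff[of "p + l - a" l] l by (simp add: lattice_coset_def)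
next
  assume "p \<in> lattice_coset \<tau> a"
  then show "p + l \<in> lattice_coset \<tau> a"
    using lattice_add[of "p - a" l] l by (simp add: lattice_coset_def diff_add_eq)
qed

lemma lattice_coset_cnj: "cnj p \<in> lattice_coset \<tau> (cnj a) \<longleftrightarrow> p \<in> lattice_coset \<tau> a"
  unfolding lattice_coset_def using lattice_cnj[of "p - a"] lattice_cnj[of "cnj p - cnj a"] by auto

lemma lattice_coset_disjoint_lattice: "a \<notin> lattice \<tau> \<Longrightarrow> l \<in> lattice \<tau> \<Longrightarrow> l \<notin> lattice_coset \<tau> a"
  using lattice_diff[of l "l - a"] by (auto simp: lattice_coset_def)

lemma closed_lattice_coset: "closed (lattice_coset \<tau> a)"
proof -
  have "lattice_coset \<tau> a = (\<lambda>p. p - a) -` lattice \<tau>"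
    by (auto simp: lattice_coset_def)
  then show ?thesis
    by (auto intro!: continuous_closed_vimage closed_lattice continuous_intros)
qed

lemma eventually_not_in_lattice_coset: "eventually (\<lambda>p. p \<notin> lattice_coset \<tau> a) (at x)"
proof (cases "x \<in> lattice_coset \<tau> a")
  case True
  have "p \<notin> lattice_coset \<tau> a" if "p \<noteq> x" "dist p x < min 1 t" for p
  proof
    assume "p \<in> lattice_coset \<tau> a"
    then have "p - x \<in> lattice \<tau>"
      using True lattice_diff[of "p - a" "x - a"] by (simp add: lattice_coset_def)
    then show False
      using lattice_norm_ge[of "p - x"] that by (auto simp: dist_norm min_le_iff_disj)
  qed
  then show ?thesis
    unfolding eventually_at using t_pos by (intro exI[of _ "min 1 t"]) auto
next
  case False
  have "eventually (\<lambda>p. p \<in> - lattice_coset \<tau> a) (at x)"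
    using False closed_lattice_coset by (intro eventually_at_in_open') (auto simp: closed_def)
  then show ?thesis
    by simp
qed

lemma lattice_cosets_add: "l \<in> lattice \<tau> \<Longrightarrow> p + l \<in> lattice_cosets \<tau> A \<longleftrightarrow> p \<in> lattice_cosets \<tau> A"
  by (simp add: lattice_cosets_def lattice_coset_add)

lemma closed_lattice_cosets: "finite A \<Longrightarrow> closed (lattice_cosets \<tau> A)"
  by (simp add: lattice_cosets_def closed_UN closed_lattice_coset)

lemma eventually_not_in_lattice_cosets:
  assumes "finite A"
  shows "eventually (\<lambda>p. p \<notin> lattice_cosets \<tau> A) (at x)"
proof -
  have "eventually (\<lambda>p. \<forall>a\<in>A. p \<notin> lattice_coset \<tau> a) (at x)"
    using assms by (rule eventually_ball_finite) (simp add: eventually_not_in_lattice_coset)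
  then show ?thesis
    by (simp add: lattice_cosets_def)
qed

lemma pole_set_add: "l \<in> lattice \<tau> \<Longrightarrow> p + l \<in> pole_set \<tau> d \<longleftrightarrow> p \<in> pole_set \<tau> d"
  by (simp add: pole_set_eq_cosets lattice_coset_add)

lemma pole_set_cnj: "cnj p \<in> pole_set \<tau> d \<longleftrightarrow> p \<in> pole_set \<tau> d"
  using lattice_coset_cnj[of p 0] lattice_coset_cnj[of p "of_real d"] by (simp add: pole_set_eq_cosets)

lemma closed_pole_set: "closed (pole_set \<tau> d)"
  by (simp add: pole_set_eq_cosets closed_Un closed_lattice_coset)

lemma eventually_not_in_pole_set: "eventually (\<lambda>p. p \<notin> pole_set \<tau> d) (at x)"
  using eventually_conj[OF eventually_not_in_lattice_coset eventually_not_in_lattice_coset]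
  by (simp add: pole_set_eq_cosets)

lemma sec_space_periodic:
  assumes "sec_space \<tau> d n f" and "p \<notin> pole_set \<tau> d" and "l \<in> lattice \<tau>"
  shows "f (p + l) = f p"
  by (rule lattice_periodic[where T = "- pole_set \<tau> d"])
     (use assms pole_set_add in \<open>auto simp: sec_space_def\<close>)

lemma sec_space_tendsto_lattice:
  assumes f: "sec_space \<tau> d n f" and lim: "((\<lambda>p. p ^ n * f p) \<longlongrightarrow> c) (at 0)"
    and l: "l \<in> lattice \<tau>"
  shows "((\<lambda>p. (p - l) ^ n * f p) \<longlongrightarrow> c) (at l)"
proof -
  have "((\<lambda>p. (p - l) ^ n * f (p - l)) \<longlongrightarrow> c) (at l)"
    using LIM_offset[OF lim, of "- l"] by simp
  moreover from eventually_not_in_pole_set[of d l]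
  have "eventually (\<lambda>p. (p - l) ^ n * f (p - l) = (p - l) ^ n * f p) (at l)"
  proof eventually_elim
    case (elim p)
    then have "p - l \<notin> pole_set \<tau> d"
      using pole_set_add[OF lattice_uminus[OF l], of p] by simp
    then show ?case
      using sec_space_periodic[OF f _ l, of "p - l"] by simp
  qed
  ultimately show ?thesis
    by (simp add: tendsto_cong)
qed

lemma sec_space_reflect:
  assumes f: "sec_space \<tau> d n f"
  shows "sec_space \<tau> d n (reflect f)"
proof -
  have per: "reflect f (z + 1) = reflect f z \<and> reflect f (z + \<tau>) = reflect f z"
    if "z \<notin> pole_set \<tau> d" for z
  proof -
    have cz: "cnj z \<notin> pole_set \<tau> d"
      using that by (simp add: pole_set_cnj)
    have "cnj \<tau> = - \<tau>"
      by (simp add: tau_eq)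
    then show ?thesis
      using sec_space_periodic[OF f cz lattice_1] sec_space_periodic[OF f cz lattice_uminus[OF lattice_tau]]
      by (simp add: reflect_def)
  qed
  have "reflect f holomorphic_on cnj -` (- pole_set \<tau> d)"
    using f closed_pole_set by (intro holomorphic_on_reflect) (auto simp: sec_space_def)
  moreover have "cnj -` (- pole_set \<tau> d) = - pole_set \<tau> d"
    by (auto simp: pole_set_cnj)
  ultimately have hol: "reflect f holomorphic_on - pole_set \<tau> d"
    by simp
  have poles: "pole_order_le (reflect f) l n" "pole_order_le (reflect f) (of_real d + l) 1"
    if l: "l \<in> lattice \<tau>" for l
  proof -
    show "pole_order_le (reflect f) l n"
      using f lattice_cnj[OF l] by (intro pole_order_le_reflect) (simp add: sec_space_def)
    have "cnj (of_real d + l) = of_real d + cnj l"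
      by simp
    then show "pole_order_le (reflect f) (of_real d + l) 1"
      using f lattice_cnj[OF l] by (intro pole_order_le_reflect) (simp add: sec_space_def)
  qed
  show ?thesis
    unfolding sec_space_def using per hol poles by blast
qed

lemma sec_space_diff_lower:
  assumes f: "sec_space \<tau> d (Suc m) f" and g: "sec_space \<tau> d (Suc m) g"
    and lim_f: "((\<lambda>p. p ^ Suc m * f p) \<longlongrightarrow> c) (at 0)"
    and lim_g: "((\<lambda>p. p ^ Suc m * g p) \<longlongrightarrow> c) (at 0)"
  shows "sec_space \<tau> d m (\<lambda>p. f p - g p)"
proof -
  have "pole_order_le (\<lambda>p. f p - g p) l m" if l: "l \<in> lattice \<tau>" for l
  proof (rule pole_order_le_lower)
    show "pole_order_le (\<lambda>p. f p - g p) l (Suc m)"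
      using f g l by (intro pole_order_le_diff) (auto simp: sec_space_def)
    have "((\<lambda>p. (p - l) ^ Suc m * f p - (p - l) ^ Suc m * g p) \<longlongrightarrow> c - c) (at l)"
      by (intro tendsto_diff sec_space_tendsto_lattice[OF f lim_f l] sec_space_tendsto_lattice[OF g lim_g l])
    then show "((\<lambda>p. (p - l) ^ Suc m * (f p - g p)) \<longlongrightarrow> 0) (at l)"
      by (simp add: right_diff_distrib)
  qed
  moreover have "pole_order_le (\<lambda>p. f p - g p) (of_real d + l) 1" if "l \<in> lattice \<tau>" for l
    using f g that by (intro pole_order_le_diff) (auto simp: sec_space_def)
  moreover have "(\<lambda>p. f p - g p) holomorphic_on - pole_set \<tau> d"
    using f g by (auto simp: sec_space_def intro!: holomorphic_intros)
  ultimately show ?thesis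
    using f g by (auto simp: sec_space_def)
qed

lemma remove_sings_lattice_periodic:
  assumes S: "\<And>p l. l \<in> lattice \<tau> \<Longrightarrow> p + l \<in> S \<longleftrightarrow> p \<in> S"
    and discrete: "\<And>x. eventually (\<lambda>u. u \<notin> S) (at x)"
    and per: "\<And>p. p \<notin> S \<Longrightarrow> g (p + 1) = g p \<and> g (p + \<tau>) = g p"
    and l: "l \<in> lattice \<tau>"
  shows "remove_sings g (x + l) = remove_sings g x"
proof (rule remove_sings_shift)
  show "eventually (\<lambda>u. g (u + l) = g u) (at x)"
    using discrete[of x] by eventually_elim (rule lattice_periodic[where T = "- S"], use S per l in auto)
qed

lemma sec_space_mult_elliptic:
  fixes f h :: "complex \<Rightarrow> complex"
  assumes A: "finite A" "A \<inter> lattice \<tau> = {}"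
    and f: "sec_space \<tau> d (Suc m) f"
    and h_hol: "h holomorphic_on - lattice_cosets \<tau> A"
    and h_per: "\<And>p. p \<notin> lattice_cosets \<tau> A \<Longrightarrow> h (p + 1) = h p \<and> h (p + \<tau>) = h p"
    and h0: "h 0 = 0"
    and lim: "\<And>a. a \<in> A \<Longrightarrow> \<exists>c. ((\<lambda>u. f u * h u) \<longlongrightarrow> c) (at a)"
  shows "sec_space \<tau> d m (remove_sings (\<lambda>u. f u * h u))"
proof -
  define Z where "Z = lattice_cosets \<tau> A"
  define S where "S = pole_set \<tau> d \<union> Z"
  define g where "g u = f u * h u" for u
  have S_add: "\<And>p l. l \<in> lattice \<tau> \<Longrightarrow> p + l \<in> S \<longleftrightarrow> p \<in> S"
    by (simp add: S_def Z_def pole_set_add lattice_cosets_add)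
  have S_discrete: "\<And>x. eventually (\<lambda>u. u \<notin> S) (at x)"
    unfolding S_def Z_def
    using eventually_conj[OF eventually_not_in_pole_set eventually_not_in_lattice_cosets[OF A(1)]] by simp
  have open_S: "open (- S)" and open_Z: "open (- Z)"
    using closed_pole_set closed_lattice_cosets[OF A(1)] by (auto simp: S_def Z_def)
  have Z_lattice: "l \<notin> Z" if "l \<in> lattice \<tau>" for l
    using A(2) that lattice_coset_disjoint_lattice by (auto simp: Z_def lattice_cosets_def)
  have h_lattice: "h (p + l) = h p" if "p \<notin> Z" "l \<in> lattice \<tau>" for p l
    by (rule lattice_periodic[where T = "- Z"]) (use that h_per lattice_cosets_add in \<open>auto simp: Z_def\<close>)
  have h_ana: "h analytic_on {u}" if "u \<notin> Z" for u
    using h_hol open_Z that by (intro holomorphic_on_imp_analytic_at[of _ "- Z"]) (auto simp: Z_def)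
  have g_per: "g (p + 1) = g p \<and> g (p + \<tau>) = g p" if "p \<notin> S" for p
    using that f h_per by (auto simp: S_def Z_def g_def sec_space_def)
  have g_ana: "g analytic_on {u}" if "u \<notin> S" for u
  proof -
    have "f analytic_on {u}"
      using f open_S that closed_pole_set
      by (intro holomorphic_on_imp_analytic_at[of _ "- pole_set \<tau> d"]) (auto simp: sec_space_def S_def)
    then show ?thesis
      unfolding g_def[abs_def] using h_ana that by (intro analytic_on_mult) (auto simp: S_def)
  qed
  have F_eq: "eventually (\<lambda>u. g u = remove_sings g u) (at x)" for x
    using eventually_remove_sings_eq_at[OF isolated_singularity_at_discrete[OF S_discrete g_ana]]
    by (simp add: eq_commute)
  have F_ana: "remove_sings g analytic_on {x}" if "x \<notin> pole_set \<tau> d \<or> x \<in> Z" for x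
  proof (cases "x \<in> Z")
    case True
    then obtain a where a: "a \<in> A" "x - a \<in> lattice \<tau>"
      by (auto simp: Z_def lattice_cosets_def lattice_coset_def)
    have "eventually (\<lambda>u. g (u + (x - a)) = g u) (at a)"
      using S_discrete[of a] by eventually_elim (rule lattice_periodic[where T = "- S"], use S_add g_per a in auto)
    moreover obtain c where "(g \<longlongrightarrow> c) (at a)"
      using lim[OF a(1)] by (auto simp: g_def[abs_def])
    ultimately have "(g \<longlongrightarrow> c) (at (a + (x - a)))"
      by (rule tendsto_at_shift)
    then have "(g \<longlongrightarrow> c) (at x)"
      by simp
    with S_discrete g_ana show ?thesis
      by (rule remove_sings_analytic_at_discrete)
  next
    case False
    with that have "x \<notin> S"
      by (simp add: S_def)
    then show ?thesis
      by (rule remove_sings_analytic_on[OF g_ana])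
  qed
  have pole_lattice: "pole_order_le (remove_sings g) l m" if l: "l \<in> lattice \<tau>" for l
  proof -
    have hl: "h l = 0"
      using h_lattice[of 0 l] Z_lattice[OF lattice_0] h0 l by simp
    have pf: "pole_order_le f l (Suc m)"
      using f l by (simp add: sec_space_def)
    then have pg: "pole_order_le g l (Suc m)"
      unfolding g_def[abs_def] by (rule pole_order_le_mult[OF _ h_ana[OF Z_lattice[OF l]]])
    obtain c where "((\<lambda>z. (z - l) ^ Suc m * f z) \<longlongrightarrow> c) (at l)"
      using pf by (rule pole_order_le_tendsto)
    moreover have "(h \<longlongrightarrow> h l) (at l)"
      using analytic_at_imp_isCont[OF h_ana[OF Z_lattice[OF l]]] by (rule isContD)
    ultimately have "((\<lambda>z. (z - l) ^ Suc m * f z * h z) \<longlongrightarrow> c * h l) (at l)"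
      by (rule tendsto_mult)
    then have "((\<lambda>z. (z - l) ^ Suc m * g z) \<longlongrightarrow> 0) (at l)"
      using hl by (simp add: g_def mult.assoc)
    then have "pole_order_le g l m"
      by (rule pole_order_le_lower[OF pg])
    then show ?thesis
      by (rule pole_order_le_cong[OF F_eq])
  qed
  have pole_shifted: "pole_order_le (remove_sings g) (of_real d + l) 1" if l: "l \<in> lattice \<tau>" for l
  proof (cases "of_real d + l \<in> Z")
    case True
    then show ?thesis
      by (intro analytic_imp_pole_order_le F_ana) simp
  next
    case False
    then have "pole_order_le g (of_real d + l) 1"
      unfolding g_def[abs_def]
      by (intro pole_order_le_mult[OF _ h_ana]) (use f l in \<open>simp_all add: sec_space_def\<close>)
    then show ?thesis
      by (rule pole_order_le_cong[OF F_eq])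
  qed
  have "remove_sings g holomorphic_on - pole_set \<tau> d"
    using F_ana by (intro analytic_imp_holomorphic analytic_on_analytic_at[THEN iffD2]) auto
  moreover have "remove_sings g (x + l) = remove_sings g x" if "l \<in> lattice \<tau>" for x l
    by (rule remove_sings_lattice_periodic[OF S_add S_discrete g_per that])
  ultimately show ?thesis
    using pole_lattice pole_shifted lattice_1 lattice_tau
    by (auto simp: sec_space_def g_def[abs_def])
qed

end

lemma exp_power_int: "exp x powi k = exp (of_int k * x)" for x :: real
proof (cases "k \<ge> 0")
  case True
  then obtain n where "k = int n"
    using nonneg_int_cases by blast
  then show ?thesis
    by (simp add: exp_of_nat_mult)
next
  case False
  then have "k = - int (nat (- k))"
    by simp
  then obtain n where "k = - int n"
    by blast
  then show ?thesis
    by (simp add: power_int_minus exp_of_nat_mult exp_minus)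
qed

lemma Ints_not_in_unit_interval:
  fixes x :: real
  assumes "x \<in> \<int>" "0 < x" "x < 1"
  shows False
proof -
  obtain k where "x = of_int k"
    using assms(1) by (rule Ints_cases)
  with assms(2,3) have "0 < k" "k < 1"
    by simp_all
  then show False
    by simp
qed

context rect_lattice
begin

lemma not_in_lattice_coset:
  assumes "0 < \<bar>Im (p - a)\<bar>" "\<bar>Im (p - a)\<bar> < t"
  shows "p \<notin> lattice_coset \<tau> a"
proof
  assume "p \<in> lattice_coset \<tau> a"
  then have "Im (p - a) / t \<in> \<int>"
    by (simp add: lattice_coset_def mem_lattice_iff)
  then have "\<bar>Im (p - a) / t\<bar> \<in> \<int>"
    by (rule Ints_abs)
  moreover have "0 < \<bar>Im (p - a) / t\<bar>" "\<bar>Im (p - a) / t\<bar> < 1"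
    using assms t_pos by (simp_all add: abs_divide)
  ultimately show False
    by (rule Ints_not_in_unit_interval)
qed

definition freq :: real where
  "freq = 2 * pi / t"

definition multiplier :: real where
  "multiplier = exp freq"

definition exp_coord :: "complex \<Rightarrow> complex \<Rightarrow> complex" where
  "exp_coord a p = exp (of_real freq * (p - a))"

lemma freq_pos: "freq > 0"
  using t_pos by (simp add: freq_def)

lemma multiplier_gt_1: "multiplier > 1"
  using freq_pos by (simp add: multiplier_def)

lemma exp_coord_nonzero: "exp_coord a p \<noteq> 0"
  by (simp add: exp_coord_def)

lemma exp_coord_add_1: "exp_coord a (p + 1) = exp_coord a p * of_real multiplier"
proof -
  have "of_real freq * (p + 1 - a) = of_real freq * (p - a) + of_real freq"
    by (simp add: algebra_simps)
  then show ?thesis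
    by (simp add: exp_coord_def multiplier_def exp_add exp_of_real)
qed

lemma exp_coord_add_tau: "exp_coord a (p + \<tau>) = exp_coord a p"
proof -
  have "freq * t = 2 * pi"
    using t_pos by (simp add: freq_def)
  have "of_real freq * \<tau> = \<i> * of_real (freq * t)"
    by (simp add: tau_eq)
  also have "\<dots> = 2 * of_real pi * \<i>"
    using \<open>freq * t = 2 * pi\<close> by simp
  finally have "of_real freq * (p + \<tau> - a) = of_real freq * (p - a) + 2 * of_real pi * \<i>"
    by (simp add: algebra_simps)
  then show ?thesis
    by (simp add: exp_coord_def exp_add)
qed

lemma exp_coord_base_add_tau: "exp_coord (a + \<tau>) p = exp_coord a p"
  using exp_coord_add_tau[of a "p - \<tau>"] by (simp add: exp_coord_def algebra_simps)

lemma cnj_exp_coord: "cnj (exp_coord a p) = exp_coord (cnj a) (cnj p)"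
  by (simp add: exp_coord_def exp_cnj)

lemma exp_coord_eq_power_int:
  assumes "exp_coord a p = of_real (multiplier powi k)"
  shows "p \<in> lattice_coset \<tau> a"
proof -
  have e: "of_real (multiplier powi k) = exp (of_real (of_int k * freq))"
    by (simp only: multiplier_def exp_power_int exp_of_real)
  have "exp (of_real freq * (p - a)) = exp (of_real (of_int k * freq))"
    using assms unfolding e exp_coord_def .
  then obtain n :: int where n: "of_real freq * (p - a) = of_real (of_int k * freq) + of_int (2 * n) * pi * \<i>"
    unfolding exp_eq by blast
  have re: "freq * Re (p - a) = of_int k * freq" and im: "freq * Im (p - a) = 2 * of_int n * pi"
    using arg_cong[OF n, of Re] arg_cong[OF n, of Im] by simp_all
  have "Re (p - a) = of_int k"
    using re freq_pos by (simp add: mult.commute[of freq])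
  moreover have "Im (p - a) = 2 * of_int n * pi / freq"
    using im freq_pos by (simp add: eq_divide_eq mult.commute)
  moreover have "2 * of_int n * pi / freq = of_int n * t"
    using t_pos by (simp add: freq_def)
  ultimately show ?thesis
    using t_pos by (simp add: lattice_coset_def mem_lattice_iff)
qed

lemma exp_coord_not_power_int: "p \<notin> lattice_coset \<tau> a \<Longrightarrow> exp_coord a p \<noteq> of_real (multiplier powi k)"
  using exp_coord_eq_power_int by blast

lemma exp_coord_ne_1: "p \<notin> lattice_coset \<tau> a \<Longrightarrow> exp_coord a p \<noteq> 1"
  using exp_coord_not_power_int[of p a 0] by simp

lemma has_field_derivative_exp_coord: "(exp_coord a has_field_derivative of_real freq * exp_coord a p) (at p)"
  unfolding exp_coord_def[abs_def] by (auto intro!: derivative_eq_intros)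

lemma isCont_exp_coord: "isCont (exp_coord a) p"
  using has_field_derivative_exp_coord by (rule DERIV_isCont)

lemma tendsto_exp_coord_quotient: "((\<lambda>u. (u - a) / (exp_coord a u - 1)) \<longlongrightarrow> 1 / of_real freq) (at a)"
proof -
  have "((\<lambda>u. (exp_coord a u - exp_coord a a) / (u - a)) \<longlongrightarrow> of_real freq * exp_coord a a) (at a)"
    using has_field_derivative_exp_coord[of a a] by (simp add: has_field_derivative_iff)
  then have "((\<lambda>u. inverse ((exp_coord a u - 1) / (u - a))) \<longlongrightarrow> inverse (of_real freq)) (at a)"
    using freq_pos by (intro tendsto_inverse) (simp_all add: exp_coord_def)
  then show ?thesis
    by (simp add: inverse_eq_divide)
qed

lemma exp_coord_polar:
  "exp_coord a p = of_real (exp (freq * Re (p - a))) *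
     (of_real (cos (freq * Im (p - a))) + \<i> * of_real (sin (freq * Im (p - a))))"
  by (simp add: exp_coord_def complex_eq_iff Re_exp Im_exp)

lemma Im_exp_coord: "Im (exp_coord a p) = exp (freq * Re (p - a)) * sin (freq * Im (p - a))"
  by (simp add: exp_coord_def Im_exp)

lemma exp_coord_real_pos: "Im (p - a) = 0 \<Longrightarrow> exp_coord a p = of_real (exp (freq * Re (p - a)))"
  by (simp add: exp_coord_polar)

lemma exp_coord_real_neg:
  assumes "\<bar>Im (p - a)\<bar> = t / 2"
  shows "exp_coord a p = of_real (- exp (freq * Re (p - a)))"
proof -
  have half: "freq * (t / 2) = pi"
    using t_pos by (simp add: freq_def)
  have "Im (p - a) = t / 2 \<or> Im (p - a) = - (t / 2)"
    using assms by linarith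
  then have "freq * Im (p - a) = pi \<or> freq * Im (p - a) = - pi"
    using half by (metis mult_minus_right)
  then show ?thesis
    by (auto simp: exp_coord_polar)
qed

definition wp_at :: "complex \<Rightarrow> complex \<Rightarrow> complex" where
  "wp_at a p = q_wp multiplier (exp_coord a p)"

definition zeta_at :: "complex \<Rightarrow> complex \<Rightarrow> complex" where
  "zeta_at a p = q_zeta multiplier (exp_coord a p)"

lemma wp_at_field_differentiable:
  assumes "p \<notin> lattice_coset \<tau> a"
  shows "wp_at a field_differentiable at p"
proof -
  have "q_wp multiplier field_differentiable at (exp_coord a p)"
    using assms by (intro q_wp_field_differentiable multiplier_gt_1 exp_coord_nonzero exp_coord_not_power_int)
  moreover have "exp_coord a field_differentiable at p"
    using has_field_derivative_exp_coord unfolding field_differentiable_def by blast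
  ultimately show ?thesis
    using field_differentiable_compose by (auto simp: wp_at_def[abs_def] o_def)
qed

lemma zeta_at_field_differentiable:
  assumes "p \<notin> lattice_coset \<tau> a"
  shows "zeta_at a field_differentiable at p"
proof -
  have "q_zeta multiplier field_differentiable at (exp_coord a p)"
    using assms by (intro q_zeta_field_differentiable multiplier_gt_1 exp_coord_nonzero exp_coord_not_power_int)
  moreover have "exp_coord a field_differentiable at p"
    using has_field_derivative_exp_coord unfolding field_differentiable_def by blast
  ultimately show ?thesis
    using field_differentiable_compose by (auto simp: zeta_at_def[abs_def] o_def)
qed

lemma wp_at_periodic: "wp_at a (p + 1) = wp_at a p" "wp_at a (p + \<tau>) = wp_at a p"
  by (simp_all add: wp_at_def exp_coord_add_1 exp_coord_add_tau q_wp_mult[OF multiplier_gt_1 exp_coord_nonzero])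

lemma zeta_at_quasi_periodic:
  assumes "p \<notin> lattice_coset \<tau> a"
  shows "zeta_at a (p + 1) = zeta_at a p + 1" "zeta_at a (p + \<tau>) = zeta_at a p"
  using assms
  by (simp_all add: zeta_at_def exp_coord_add_1 exp_coord_add_tau exp_coord_ne_1
      q_zeta_mult[OF multiplier_gt_1 exp_coord_nonzero])

lemma wp_at_pole: "((\<lambda>u. (u - a) ^ 2 * wp_at a u) \<longlongrightarrow> (1 / of_real freq) ^ 2) (at a)"
proof -
  obtain R where R: "isCont R 1" "\<And>X. X \<noteq> 0 \<Longrightarrow> q_wp multiplier X = wp_term X + R X"
    using q_wp_pole_part[OF multiplier_gt_1] by blast
  have X: "(exp_coord a \<longlongrightarrow> 1) (at a)"
    using isCont_exp_coord[of a a] by (simp add: isCont_def exp_coord_def)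
  have "isCont (\<lambda>u. R (exp_coord a u)) a"
    using R(1) by (intro isCont_o2[OF isCont_exp_coord]) (simp add: exp_coord_def)
  then have "((\<lambda>u. exp_coord a u * ((u - a) / (exp_coord a u - 1)) ^ 2 + (u - a) ^ 2 * R (exp_coord a u))
      \<longlongrightarrow> 1 * (1 / of_real freq) ^ 2 + (a - a) ^ 2 * R (exp_coord a a)) (at a)"
    by (intro tendsto_intros X tendsto_exp_coord_quotient) (auto simp: isCont_def)
  moreover have "exp_coord a u * ((u - a) / (exp_coord a u - 1)) ^ 2 + (u - a) ^ 2 * R (exp_coord a u)
      = (u - a) ^ 2 * wp_at a u" for u
    by (simp add: wp_at_def R(2)[OF exp_coord_nonzero] wp_term_def power_divide field_simps)
  ultimately show ?thesis
    by simp
qed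

lemma zeta_at_pole: "((\<lambda>u. (u - a) * zeta_at a u) \<longlongrightarrow> 1 / of_real freq) (at a)"
proof -
  obtain R where R: "isCont R 1" "\<And>X. X \<noteq> 0 \<Longrightarrow> q_zeta multiplier X = zeta_term X + R X"
    using q_zeta_pole_part[OF multiplier_gt_1] by blast
  have "isCont (\<lambda>u. R (exp_coord a u)) a"
    using R(1) by (intro isCont_o2[OF isCont_exp_coord]) (simp add: exp_coord_def)
  then have "((\<lambda>u. (u - a) / (exp_coord a u - 1) + (u - a) * R (exp_coord a u))
      \<longlongrightarrow> 1 / of_real freq + (a - a) * R (exp_coord a a)) (at a)"
    by (intro tendsto_intros tendsto_exp_coord_quotient) (auto simp: isCont_def)
  moreover have "(u - a) / (exp_coord a u - 1) + (u - a) * R (exp_coord a u) = (u - a) * zeta_at a u" for u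
    by (simp add: zeta_at_def R(2)[OF exp_coord_nonzero] zeta_term_def algebra_simps)
  ultimately show ?thesis
    by simp
qed

lemma wp_at_real_pos:
  assumes "Im (p - a) = 0" and "p \<notin> lattice_coset \<tau> a"
  shows "Im (wp_at a p) = 0" and "0 < Re (wp_at a p)"
proof -
  let ?x = "exp (freq * Re (p - a))"
  have X: "exp_coord a p = of_real ?x"
    using assms(1) by (rule exp_coord_real_pos)
  have "?x \<noteq> multiplier powi k" for k
    using exp_coord_not_power_int[OF assms(2), of k] X by metis
  from q_wp_real[OF multiplier_gt_1 _ this]
  have "Im (q_wp multiplier (of_real ?x)) = 0" "0 < ?x * Re (q_wp multiplier (of_real ?x))"
    by simp_all
  then show "Im (wp_at a p) = 0" "0 < Re (wp_at a p)"
    by (simp_all add: wp_at_def X zero_less_mult_iff)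
qed

lemma wp_at_real_neg:
  assumes "\<bar>Im (p - a)\<bar> = t / 2"
  shows "Im (wp_at a p) = 0" and "Re (wp_at a p) < 0"
proof -
  let ?x = "- exp (freq * Re (p - a))"
  have X: "exp_coord a p = of_real ?x"
    using assms by (rule exp_coord_real_neg)
  have "?x \<noteq> multiplier powi k" for k
    using zero_less_power_int[of multiplier k] multiplier_gt_1 exp_gt_zero[of "freq * Re (p - a)"] by linarith
  from q_wp_real[OF multiplier_gt_1 _ this]
  have "Im (q_wp multiplier (of_real ?x)) = 0" "0 < ?x * Re (q_wp multiplier (of_real ?x))"
    by simp_all
  then show "Im (wp_at a p) = 0" "Re (wp_at a p) < 0"
    by (simp_all add: wp_at_def X mult_less_0_iff)
qed

lemma wp_at_difference_sign:
  assumes z: "z \<notin> lattice \<tau>" and Im_z: "Im z = 0 \<or> Im z = t / 2"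
    and p: "Im p = t / 2" "p \<notin> lattice_coset \<tau> z"
  shows "Im (of_real (if Im z = 0 then -1 else 1) * (wp_at z p - wp_at z 0)) = 0 \<and>
    0 < Re (of_real (if Im z = 0 then -1 else 1) * (wp_at z p - wp_at z 0))"
proof -
  have z0: "0 \<notin> lattice_coset \<tau> z"
    by (rule lattice_coset_disjoint_lattice[OF z lattice_0])
  consider "Im z = 0" | "Im z = t / 2" "Im z \<noteq> 0"
    using Im_z by blast
  then show ?thesis
  proof cases
    case 1
    then have "\<bar>Im (p - z)\<bar> = t / 2" "Im (0 - z) = 0"
      using t_pos p by simp_all
    then show ?thesis
      using wp_at_real_neg[of p z] wp_at_real_pos[of 0 z] z0 1 by simp
  next
    case 2
    then have "Im (p - z) = 0" "\<bar>Im (0 - z)\<bar> = t / 2"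
      using t_pos p by simp_all
    then show ?thesis
      using wp_at_real_pos[of p z] wp_at_real_neg[of 0 z] p 2 by simp
  qed
qed

lemma zeta_pair_pole:
  assumes "a \<notin> lattice_coset \<tau> c"
  shows "((\<lambda>u. (u - a) * (zeta_at a u - zeta_at c u - k)) \<longlongrightarrow> 1 / of_real freq) (at a)"
proof -
  have "isCont (zeta_at c) a"
    by (rule field_differentiable_imp_continuous_at[OF zeta_at_field_differentiable[OF assms]])
  then have "((\<lambda>u. (u - a) * zeta_at a u - (u - a) * (zeta_at c u + k))
      \<longlongrightarrow> 1 / of_real freq - (a - a) * (zeta_at c a + k)) (at a)"
    by (intro tendsto_intros zeta_at_pole) (simp add: isCont_def)
  then show ?thesis
    by (simp add: algebra_simps)
qed

lemma zeta_at_reflected_base: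
  assumes "cnj p = p - \<tau> \<or> cnj p = p"
  shows "zeta_at (cnj a + \<tau>) p = cnj (zeta_at a p)"
proof -
  have "exp_coord (cnj a + \<tau>) p = cnj (exp_coord a p)"
    using assms exp_coord_add_tau[of "cnj a" "cnj p"] by (auto simp: exp_coord_base_add_tau cnj_exp_coord)
  then show ?thesis
    using q_zeta_cnj[OF multiplier_gt_1 exp_coord_nonzero, of a p] by (simp add: zeta_at_def)
qed

lemma zeta_reflected_difference_sign:
  assumes z: "0 < Im z" "Im z < t / 2" and p: "Im p = t / 2"
  defines "b \<equiv> cnj z + \<tau>"
  shows "Im (\<i> * ((zeta_at z p - zeta_at b p) - (zeta_at z 0 - zeta_at b 0))) = 0 \<and>
    0 < Re (\<i> * ((zeta_at z p - zeta_at b p) - (zeta_at z 0 - zeta_at b 0)))"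
proof -
  have "cnj p = p - \<tau>"
    using p by (simp add: tau_eq complex_eq_iff)
  then have "zeta_at b p = cnj (zeta_at z p)" "zeta_at b 0 = cnj (zeta_at z 0)"
    unfolding b_def by (simp_all add: zeta_at_reflected_base)
  then have h: "\<i> * ((zeta_at z p - zeta_at b p) - (zeta_at z 0 - zeta_at b 0))
      = of_real (2 * (Im (zeta_at z 0) - Im (zeta_at z p)))"
    by (simp add: complex_eq_iff)
  have angle: "0 < freq * Im z" "freq * Im z < pi"
    using z freq_pos t_pos by (auto simp: freq_def field_simps)
  have "freq * Im (p - z) = pi - freq * Im z"
    using p t_pos by (simp add: freq_def field_simps)
  then have "0 < Im (exp_coord z p)"
    using angle by (simp add: Im_exp_coord sin_gt_zero)
  then have "Im (zeta_at z p) < 0"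
    using Im_q_zeta[OF multiplier_gt_1, of "exp_coord z p"] by (simp add: zeta_at_def mult_less_0_iff)
  moreover have "Im (exp_coord z 0) < 0"
    using angle by (simp add: Im_exp_coord sin_gt_zero)
  then have "0 < Im (zeta_at z 0)"
    using Im_q_zeta[OF multiplier_gt_1, of "exp_coord z 0"] by (simp add: zeta_at_def mult_less_0_iff)
  ultimately show ?thesis
    by (simp add: h)
qed

end

lemma eventually_at_shift: "eventually P (at (a + c)) \<longleftrightarrow> eventually (\<lambda>u. P (u + c)) (at a)"
  for a c :: complex
proof -
  have "at (a + c) = filtermap (\<lambda>u. u + c) (at a)"
    using filtermap_at_shift[of "- c" a] by simp
  then show ?thesis
    by (simp add: eventually_filtermap)
qed

lemma has_integral_zero_Re_nonneg:
  fixes F :: "real \<Rightarrow> complex"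
  assumes cont: "continuous_on {0..1} F" and int: "(F has_integral 0) {0..1}"
    and nonneg: "\<And>s. s \<in> {0..1} \<Longrightarrow> 0 \<le> Re (F s)" and s: "s \<in> {0..1}"
  shows "Re (F s) = 0"
proof -
  have "((\<lambda>s. Re (F s)) has_integral 0) (cbox 0 1)"
    using has_integral_linear[OF int bounded_linear_Re] by (simp add: o_def)
  moreover have "continuous_on (cbox 0 1) (\<lambda>s. Re (F s))"
    using cont by (auto intro: continuous_intros)
  ultimately show ?thesis
    using nonneg s by (intro has_integral_0_cbox_imp_0[of 0 1 "\<lambda>s. Re (F s)"]) auto
qed

locale orthogonal_section = rect_lattice +
  fixes d :: real and n :: nat and \<pi> :: "complex \<Rightarrow> complex" and w :: "complex \<Rightarrow> complex"
    and \<delta> :: real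
  assumes n: "n \<ge> 1"
    and pi_space: "sec_space \<tau> d n \<pi>"
    and pi_monic: "(\<lambda>p. p ^ n * \<pi> p - 1) \<in> O[at 0](\<lambda>p. p)"
    and delta: "\<delta> > 0"
    and w_hol: "w holomorphic_on {p. \<bar>Im p - Im \<tau> / 2\<bar> < \<delta>}"
    and w_real: "\<forall>s::real. w (\<tau> / 2 + of_real s) \<in> \<real>"
    and pi_orth: "\<forall>f. sec_space \<tau> d (n - 1) f \<longrightarrow>
        contour_integral (linepath (\<tau> / 2) (\<tau> / 2 + 1)) (\<lambda>p. \<pi> p * f p * exp (w p)) = 0"
begin

lemma pi_space_Suc: "sec_space \<tau> d (Suc (n - 1)) \<pi>"
  using pi_space n by simp

lemma pi_tendsto_0: "((\<lambda>p. p ^ n * \<pi> p) \<longlongrightarrow> 1) (at 0)"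
proof -
  obtain c where ev: "eventually (\<lambda>p. norm (p ^ n * \<pi> p - 1) \<le> c * norm p) (at 0)"
    using landau_o.bigE[OF pi_monic] by blast
  have "isCont (\<lambda>p :: complex. c * norm p) 0"
    by (intro continuous_intros)
  then have "((\<lambda>p. c * norm p) \<longlongrightarrow> 0) (at (0 :: complex))"
    by (simp add: isCont_def)
  with ev have "((\<lambda>p. p ^ n * \<pi> p - 1) \<longlongrightarrow> 0) (at 0)"
    by (rule Lim_null_comparison)
  then show ?thesis
    by (simp add: Lim_null[symmetric])
qed

lemma zero_not_in_lattice:
  assumes zero: "is_zero_at \<pi> z"
  shows "z \<notin> lattice \<tau>"
proof
  assume "z \<in> lattice \<tau>"
  then have "((\<lambda>u. (u - z) ^ n * \<pi> u) \<longlongrightarrow> 1) (at z)"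
    by (rule sec_space_tendsto_lattice[OF pi_space pi_tendsto_0])
  moreover have "((\<lambda>u. (u - z) ^ n * \<pi> u) \<longlongrightarrow> (z - z) ^ n * 0) (at z)"
    using zero unfolding is_zero_at_def by (intro tendsto_intros)
  ultimately show False
    using tendsto_unique[OF at_neq_bot] n by fastforce
qed

definition strip :: "complex set" where
  "strip = {p. 0 < Im p \<and> Im p < t}"

definition midline :: "real \<Rightarrow> complex" where
  "midline s = \<tau> / 2 + of_real s"

lemma open_strip: "open strip"
  unfolding strip_def by (intro open_Collect_conj open_Collect_less continuous_intros)

lemma connected_strip: "connected strip"
proof -
  have "strip = {p. Im p > 0} \<inter> {p. Im p < t}"
    by (auto simp: strip_def)
  then show ?thesis
    by (simp add: convex_connected convex_halfspace_Im_gt convex_halfspace_Im_lt convex_Int)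
qed

lemma strip_not_pole_set: "p \<in> strip \<Longrightarrow> p \<notin> pole_set \<tau> d"
proof
  assume p: "p \<in> strip" and "p \<in> pole_set \<tau> d"
  then have "Im p / t \<in> \<int>"
    by (auto simp: pole_set_eq_cosets lattice_coset_def mem_lattice_iff)
  moreover have "0 < Im p / t" "Im p / t < 1"
    using p t_pos by (auto simp: strip_def)
  ultimately show False
    by (rule Ints_not_in_unit_interval)
qed

lemma pi_holomorphic_strip: "\<pi> holomorphic_on strip"
  using pi_space strip_not_pole_set by (auto simp: sec_space_def elim: holomorphic_on_subset)

lemma Im_tau: "Im \<tau> = t"
  by (simp add: tau_eq)

lemma Im_midline: "Im (midline s) = t / 2"
  unfolding midline_def by (simp add: Im_tau)

lemma midline_strip: "midline s \<in> strip"
  using t_pos by (simp add: strip_def Im_midline)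

lemma cnj_midline: "cnj (midline s) = midline s - \<tau>"
  unfolding midline_def by (simp add: tau_eq complex_eq_iff)

lemma linepath_midline: "linepath (\<tau> / 2) (\<tau> / 2 + 1) = midline"
proof -
  have "(1 - s) *\<^sub>R a + s *\<^sub>R (a + 1) = a + of_real s" for a :: complex and s
    by (simp add: scaleR_conv_of_real algebra_simps)
  then show ?thesis
    by (simp add: linepath_def midline_def fun_eq_iff)
qed

lemma continuous_on_midline: "continuous_on S f \<Longrightarrow> (\<And>s. midline s \<in> S) \<Longrightarrow> continuous_on {0..1} (\<lambda>s. f (midline s))"
  unfolding midline_def by (rule continuous_on_compose2[of S f]) (auto intro!: continuous_intros)

lemma sec_space_continuous_midline: "sec_space \<tau> d m f \<Longrightarrow> continuous_on {0..1} (\<lambda>s. f (midline s))"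
  using strip_not_pole_set midline_strip
  by (intro continuous_on_midline[of "- pole_set \<tau> d"]) (auto simp: sec_space_def holomorphic_on_imp_continuous_on)

lemma w_continuous_midline: "continuous_on {0..1} (\<lambda>s. w (midline s))"
  using w_hol delta by (intro continuous_on_midline holomorphic_on_imp_continuous_on) (auto simp: Im_midline Im_tau)

lemma exp_w_midline: "exp (w (midline s)) = of_real (exp (Re (w (midline s))))"
proof -
  have "w (midline s) = of_real (Re (w (midline s)))"
    using w_real by (auto simp: midline_def complex_is_Real_iff complex_eq_iff)
  then show ?thesis
    by (metis exp_of_real)
qed

lemma reflect_midline: "sec_space \<tau> d m f \<Longrightarrow> reflect f (midline s) = cnj (f (midline s))"
  using sec_space_periodic[of d m f "midline s - \<tau>" \<tau>] strip_not_pole_set[OF midline_strip]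
    pole_set_add[OF lattice_uminus[OF lattice_tau], of "midline s" d]
  by (simp add: reflect_def cnj_midline lattice_tau)

lemma orthogonality_integral:
  assumes f: "sec_space \<tau> d (n - 1) f"
  shows "((\<lambda>s. \<pi> (midline s) * f (midline s) * exp (w (midline s))) has_integral 0) {0..1}"
proof -
  let ?F = "\<lambda>s. \<pi> (midline s) * f (midline s) * exp (w (midline s))"
  have "continuous_on {0..1} ?F"
    using sec_space_continuous_midline[OF pi_space] sec_space_continuous_midline[OF f] w_continuous_midline
    by (intro continuous_intros)
  then have F: "(?F has_integral integral {0..1} ?F) {0..1}"
    by (intro integrable_integral integrable_continuous_real)
  then have "((\<lambda>p. \<pi> p * f p * exp (w p)) has_contour_integral integral {0..1} ?F) (linepath (\<tau> / 2) (\<tau> / 2 + 1))"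
    unfolding has_contour_integral_linepath by (simp add: linepath_midline)
  then have "contour_integral (linepath (\<tau> / 2) (\<tau> / 2 + 1)) (\<lambda>p. \<pi> p * f p * exp (w p))
      = integral {0..1} ?F"
    by (rule contour_integral_unique)
  then have "integral {0..1} ?F = 0"
    using pi_orth f by simp
  then show ?thesis
    using F by simp
qed
lemma reflect_pi_tendsto_0: "((\<lambda>p. p ^ n * reflect \<pi> p) \<longlongrightarrow> 1) (at 0)"
proof -
  have "filterlim cnj (at 0) (at (0 :: complex))"
    using filterlim_cnj_at[of 0] by simp
  from filterlim_compose[OF pi_tendsto_0 this]
  have "((\<lambda>p. cnj (cnj p ^ n * \<pi> (cnj p))) \<longlongrightarrow> cnj 1) (at 0)"
    by (intro tendsto_cnj)
  then show ?thesis
    by (simp add: reflect_def)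
qed

lemma reflection_defect_space: "sec_space \<tau> d (n - 1) (\<lambda>p. \<pi> p - reflect \<pi> p)"
  using sec_space_diff_lower[OF pi_space_Suc sec_space_reflect[OF pi_space_Suc]] pi_tendsto_0
    reflect_pi_tendsto_0 n
  by simp

lemma reflection_defect_midline:
  assumes s: "s \<in> {0..1}"
  shows "\<pi> (midline s) = reflect \<pi> (midline s)"
proof -
  define D where "D p = \<pi> p - reflect \<pi> p" for p
  have D: "sec_space \<tau> d (n - 1) D"
    unfolding D_def[abs_def] by (rule reflection_defect_space)
  define F where "F s = \<pi> (midline s) * cnj (D (midline s)) * exp (w (midline s))
    - cnj (\<pi> (midline s) * D (midline s) * exp (w (midline s)))" for s
  have I1: "((\<lambda>s. \<pi> (midline s) * cnj (D (midline s)) * exp (w (midline s))) has_integral 0) {0..1}"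
    using orthogonality_integral[OF sec_space_reflect[OF D]] by (simp add: reflect_midline[OF D])
  have I2: "((\<lambda>s. cnj (\<pi> (midline s) * D (midline s) * exp (w (midline s)))) has_integral 0) {0..1}"
    using has_integral_cnj[THEN iffD2, OF orthogonality_integral[OF D]] by (simp add: o_def)
  have "(F has_integral 0 - 0) {0..1}"
    unfolding F_def[abs_def] by (rule has_integral_diff[OF I1 I2])
  then have int: "(F has_integral 0) {0..1}"
    by simp
  have F_eq: "F s = of_real ((norm (D (midline s)))\<^sup>2 * exp (Re (w (midline s))))" for s
  proof -
    have eq: "\<pi> (midline s) - cnj (\<pi> (midline s)) = D (midline s)"
      by (simp add: D_def reflect_midline[OF pi_space])
    have "F s = (\<pi> (midline s) - cnj (\<pi> (midline s))) * cnj (D (midline s)) * exp (w (midline s))"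
      by (simp add: F_def exp_w_midline algebra_simps)
    also have "\<dots> = D (midline s) * cnj (D (midline s)) * exp (w (midline s))"
      by (simp only: eq)
    also have "\<dots> = of_real ((norm (D (midline s)))\<^sup>2) * of_real (exp (Re (w (midline s))))"
      by (simp only: complex_norm_square exp_w_midline)
    finally show ?thesis
      by simp
  qed
  have "continuous_on {0..1} F"
    unfolding F_def using sec_space_continuous_midline[OF pi_space] sec_space_continuous_midline[OF D]
      w_continuous_midline
    by (intro continuous_intros)
  from has_integral_zero_Re_nonneg[OF this int _ s] have "D (midline s) = 0"
    by (simp add: F_eq)
  then show ?thesis
    by (simp add: D_def)
qed

lemma pi_real_midline:
  assumes "s \<in> {0..1}"
  shows "Im (\<pi> (midline s)) = 0"
proof -
  have "cnj (\<pi> (midline s)) = \<pi> (midline s)"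
    using reflection_defect_midline[OF assms] reflect_midline[OF pi_space, of s] by simp
  from arg_cong[OF this, of Im] show ?thesis
    by simp
qed

lemma midline_islimpt: "midline (1 / 2) islimpt midline ` {0..1}"
  unfolding islimpt_approachable
proof (intro allI impI)
  fix e :: real
  assume e: "e > 0"
  let ?x = "midline (1 / 2 + min (e / 2) (1 / 4))"
  have "?x \<in> midline ` {0..1}"
    using e by (intro imageI) (auto simp: min_def)
  moreover have "?x \<noteq> midline (1 / 2)" "dist ?x (midline (1 / 2)) < e"
    using e by (simp_all add: midline_def dist_norm)
  ultimately show "\<exists>x'\<in>midline ` {0..1}. x' \<noteq> midline (1 / 2) \<and> dist x' (midline (1 / 2)) < e"
    by blast
qed

lemma pi_reflection:
  assumes p: "p \<in> strip"
  shows "\<pi> (cnj p + \<tau>) = cnj (\<pi> p)"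
proof -
  have "(\<lambda>p. \<pi> p - reflect \<pi> p) holomorphic_on - pole_set \<tau> d"
    using reflection_defect_space by (simp add: sec_space_def)
  then have "(\<lambda>p. \<pi> p - reflect \<pi> p) holomorphic_on strip"
    by (rule holomorphic_on_subset) (use strip_not_pole_set in blast)
  then have "\<pi> p - reflect \<pi> p = 0"
  proof (rule analytic_continuation[OF _ open_strip connected_strip _ _ midline_islimpt _ p])
    show "midline ` {0..1} \<subseteq> strip" "midline (1 / 2) \<in> strip"
      using midline_strip by blast+
    show "\<pi> z - reflect \<pi> z = 0" if "z \<in> midline ` {0..1}" for z
      using that reflection_defect_midline by auto
  qed
  moreover have "cnj p \<notin> pole_set \<tau> d"
    using strip_not_pole_set[OF p] by (simp add: pole_set_cnj)
  ultimately show ?thesis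
    using sec_space_periodic[OF pi_space _ lattice_tau, of "cnj p"] by (simp add: reflect_def)
qed

lemma pi_not_zero_on_midline: "\<not> (\<forall>s\<in>{0..1}. \<pi> (midline s) = 0)"
proof
  assume midline_zero: "\<forall>s\<in>{0..1}. \<pi> (midline s) = 0"
  have zero: "\<pi> p = 0" if p: "p \<in> strip" for p
  proof (rule analytic_continuation[OF pi_holomorphic_strip open_strip connected_strip _ _ midline_islimpt _ p])
    show "midline ` {0..1} \<subseteq> strip" "midline (1 / 2) \<in> strip"
      using midline_strip by blast+
    show "\<pi> z = 0" if "z \<in> midline ` {0..1}" for z
      using that midline_zero by blast
  qed
  have "0 islimpt strip"
    unfolding islimpt_approachable
  proof (intro allI impI)
    fix e :: real
    assume e: "e > 0"
    let ?x = "\<i> * of_real (min (e / 2) (t / 2))"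
    have "0 < min (e / 2) (t / 2)" "min (e / 2) (t / 2) < t" "min (e / 2) (t / 2) < e"
      using e t_pos by auto
    then have "?x \<in> strip" "?x \<noteq> 0" "dist ?x 0 < e"
      by (simp_all add: strip_def norm_mult)
    then show "\<exists>x'\<in>strip. x' \<noteq> 0 \<and> dist x' 0 < e"
      by blast
  qed
  then have nontriv: "at 0 within strip \<noteq> bot"
    by (simp add: trivial_limit_within)
  have "((\<lambda>p. p ^ n * \<pi> p) \<longlongrightarrow> 1) (at 0 within strip)"
    by (rule tendsto_within_subset[OF pi_tendsto_0]) simp
  moreover have "((\<lambda>p. p ^ n * \<pi> p) \<longlongrightarrow> 0) (at 0 within strip)"
    by (rule tendsto_eventually) (simp add: eventually_at_filter zero)
  ultimately have "(1 :: complex) = 0"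
    by (rule tendsto_unique[OF nontriv])
  then show False
    by simp
qed

lemma no_positive_multiplier:
  assumes f: "sec_space \<tau> d (n - 1) f"
    and mult: "\<And>s. s \<in> {0..1} \<Longrightarrow> \<pi> (midline s) \<noteq> 0 \<Longrightarrow>
      f (midline s) = \<pi> (midline s) * h s \<and> Im (\<kappa> * h s) = 0 \<and> 0 < Re (\<kappa> * h s)"
  shows False
proof -
  define F where "F s = \<kappa> * (\<pi> (midline s) * f (midline s) * exp (w (midline s)))" for s
  have int: "(F has_integral 0) {0..1}"
    unfolding F_def using has_integral_mult_right[OF orthogonality_integral[OF f], of \<kappa>] by simp
  have cont: "continuous_on {0..1} F"
    unfolding F_def using sec_space_continuous_midline[OF pi_space] sec_space_continuous_midline[OF f]
      w_continuous_midline
    by (intro continuous_intros)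
  have F_eq: "F s = of_real ((Re (\<pi> (midline s)))\<^sup>2 * Re (\<kappa> * h s) * exp (Re (w (midline s))))"
    if "s \<in> {0..1}" "\<pi> (midline s) \<noteq> 0" for s
  proof -
    have "\<pi> (midline s) = of_real (Re (\<pi> (midline s)))"
      using pi_real_midline[OF that(1)] by (simp add: complex_eq_iff)
    then obtain P where P: "\<pi> (midline s) = of_real P"
      by blast
    have "\<kappa> * h s = of_real (Re (\<kappa> * h s))"
      using mult[OF that] by (simp add: complex_eq_iff)
    then obtain K where K: "\<kappa> * h s = of_real K"
      by blast
    have "F s = (\<kappa> * h s) * \<pi> (midline s) * \<pi> (midline s) * exp (w (midline s))"
      using mult[OF that] by (simp add: F_def mult_ac)
    then show ?thesis
      by (simp add: P K exp_w_midline power2_eq_square mult_ac)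
  qed
  have F_nonneg: "0 \<le> Re (F s)" if "s \<in> {0..1}" for s
    using F_eq[OF that] mult[OF that] by (cases "\<pi> (midline s) = 0") (auto simp: F_def)
  have "\<pi> (midline s) = 0" if s: "s \<in> {0..1}" for s
  proof (rule ccontr)
    assume nz: "\<pi> (midline s) \<noteq> 0"
    have "Re (F s) = 0"
      by (rule has_integral_zero_Re_nonneg[OF cont int F_nonneg s])
    moreover have "Re (\<pi> (midline s)) \<noteq> 0"
      using nz pi_real_midline[OF s] by (simp add: complex_eq_iff)
    ultimately show False
      using F_eq[OF s nz] mult[OF s nz] by simp
  qed
  then show False
    using pi_not_zero_on_midline by blast
qed

lemma pi_analytic: "p \<notin> pole_set \<tau> d \<Longrightarrow> \<pi> analytic_on {p}"
  using pi_space closed_pole_set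
  by (intro holomorphic_on_imp_analytic_at[of _ "- pole_set \<tau> d"]) (auto simp: sec_space_def)

lemma pi_eq_0_if_tendsto:
  assumes "z \<notin> pole_set \<tau> d" and "(\<pi> \<longlongrightarrow> 0) (at z)"
  shows "\<pi> z = 0"
proof -
  have "(\<pi> \<longlongrightarrow> \<pi> z) (at z)"
    using isContD[OF analytic_at_imp_isCont[OF pi_analytic[OF assms(1)]]] .
  from tendsto_unique[OF at_neq_bot this assms(2)] show ?thesis .
qed

lemma eventually_pi_shift:
  assumes "l \<in> lattice \<tau>"
  shows "eventually (\<lambda>u. \<pi> (u + l) = \<pi> u) (at z)"
  using eventually_not_in_pole_set[of d z]
  by eventually_elim (rule sec_space_periodic[OF pi_space _ assms])

lemma no_double_zero_on_symmetry_lines: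
  assumes z: "z \<notin> lattice \<tau>" and Im_z: "Im z = 0 \<or> Im z = t / 2"
    and q: "q analytic_on {z}" and double: "eventually (\<lambda>u. \<pi> u = (u - z) ^ 2 * q u) (at z)"
  shows False
proof -
  define h where "h p = wp_at z p - wp_at z 0" for p
  have h_diff: "h field_differentiable at p" if "p \<notin> lattice_coset \<tau> z" for p
    unfolding h_def[abs_def]
    by (rule field_differentiable_diff[OF wp_at_field_differentiable[OF that] field_differentiable_const])
  have h_hol: "h holomorphic_on - lattice_coset \<tau> z"
    by (simp add: holomorphic_on_def field_differentiable_at_within h_diff)
  have h_ana: "h analytic_on {p}" if "p \<notin> lattice_coset \<tau> z" for p
    by (rule holomorphic_on_imp_analytic_at[OF h_hol]) (simp_all add: open_Compl closed_lattice_coset that)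
  have "((\<lambda>u. (u - z) ^ 2 * wp_at z u - (u - z) ^ 2 * wp_at z 0) \<longlongrightarrow> (1 / of_real freq) ^ 2 - (z - z) ^ 2 * wp_at z 0) (at z)"
    by (intro tendsto_intros wp_at_pole)
  then have "((\<lambda>u. (u - z) ^ 2 * h u) \<longlongrightarrow> (1 / of_real freq) ^ 2) (at z)"
    by (simp add: h_def right_diff_distrib)
  then have lim: "((\<lambda>u. \<pi> u * h u) \<longlongrightarrow> q z * (1 / of_real freq) ^ 2) (at z)"
    by (rule tendsto_mult_factor[OF double analytic_at_imp_isCont[OF q]])
  define f where "f = remove_sings (\<lambda>u. \<pi> u * h u)"
  have f: "sec_space \<tau> d (n - 1) f"
    unfolding f_def
  proof (rule sec_space_mult_elliptic[OF _ _ pi_space_Suc])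
    show "h holomorphic_on - lattice_cosets \<tau> {z}"
      using h_hol by (simp add: lattice_cosets_def)
    show "\<exists>c. ((\<lambda>u. \<pi> u * h u) \<longlongrightarrow> c) (at a)" if "a \<in> {z}" for a
      using lim that by blast
    show "finite {z}" "{z} \<inter> lattice \<tau> = {}" "h 0 = 0"
      using z by (simp_all add: h_def)
    show "h (p + 1) = h p \<and> h (p + \<tau>) = h p" for p
      by (simp add: h_def wp_at_periodic)
  qed
  have "((\<lambda>u. (u - z) ^ 2 * q u) \<longlongrightarrow> (z - z) ^ 2 * q z) (at z)"
    using analytic_at_imp_isCont[OF q] by (intro tendsto_intros) (simp add: isCont_def)
  then have pi_lim: "(\<pi> \<longlongrightarrow> 0) (at z)"
    unfolding tendsto_cong[OF double] by simp
  define \<sigma> :: real where "\<sigma> = (if Im z = 0 then -1 else 1)"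
  show False
  proof (rule no_positive_multiplier[OF f, where h = "\<lambda>s. h (midline s)" and \<kappa> = "of_real \<sigma>"])
    fix s
    assume s: "s \<in> {0..1}" and nz: "\<pi> (midline s) \<noteq> 0"
    have mid: "midline s \<notin> pole_set \<tau> d"
      by (rule strip_not_pole_set[OF midline_strip])
    have not_coset: "midline s \<notin> lattice_coset \<tau> z"
    proof
      assume "midline s \<in> lattice_coset \<tau> z"
      then have l: "midline s - z \<in> lattice \<tau>"
        by (simp add: lattice_coset_def)
      have zP: "z \<notin> pole_set \<tau> d"
        using mid pole_set_add[OF l, of z] by simp
      have "\<pi> (midline s) = \<pi> z"
        using sec_space_periodic[OF pi_space zP l] by simp
      with nz pi_eq_0_if_tendsto[OF zP pi_lim] show False
        by simp
    qed
    have "(\<lambda>u. \<pi> u * h u) analytic_on {midline s}"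
      by (rule analytic_on_mult[OF pi_analytic[OF mid] h_ana[OF not_coset]])
    then have "f (midline s) = \<pi> (midline s) * h (midline s)"
      unfolding f_def by (rule remove_sings_at_analytic)
    moreover have "Im (of_real \<sigma> * h (midline s)) = 0 \<and> 0 < Re (of_real \<sigma> * h (midline s))"
      unfolding h_def \<sigma>_def
      by (rule wp_at_difference_sign[OF z Im_z Im_midline not_coset])
    ultimately show "f (midline s) = \<pi> (midline s) * h (midline s) \<and> Im (of_real \<sigma> * h (midline s)) = 0
      \<and> 0 < Re (of_real \<sigma> * h (midline s))"
      by blast
  qed
qed
lemma tendsto_pi_mult_at_zero:
  assumes a: "a \<notin> pole_set \<tau> d" "\<pi> a = 0" and lim: "((\<lambda>u. (u - a) * h u) \<longlongrightarrow> c) (at a)"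
  shows "\<exists>c. ((\<lambda>u. \<pi> u * h u) \<longlongrightarrow> c) (at a)"
proof -
  obtain P where P: "P analytic_on {a}" "\<And>u. \<pi> u = (u - a) * P u"
    using analytic_factor_zero[OF pi_analytic[OF a(1)] a(2)] by blast
  have "eventually (\<lambda>u. \<pi> u = (u - a) ^ 1 * P u) (at a)"
    by (simp add: P(2))
  from tendsto_mult_factor[OF this analytic_at_imp_isCont[OF P(1)]] lim show ?thesis
    by auto
qed

lemma no_zero_below_midline:
  assumes Im_z: "0 < Im z" "Im z < t / 2" and zero: "\<pi> z = 0"
  shows False
proof -
  define b where "b = cnj z + \<tau>"
  have Im_b: "Im b = t - Im z"
    by (simp add: b_def Im_tau)
  have z_PS: "z \<notin> pole_set \<tau> d" and b_PS: "b \<notin> pole_set \<tau> d"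
    using Im_z Im_b t_pos by (auto intro!: strip_not_pole_set simp: strip_def)
  have zb: "z \<notin> lattice_coset \<tau> b" and bz: "b \<notin> lattice_coset \<tau> z"
    using Im_z Im_b by (intro not_in_lattice_coset; simp add: abs_if)+
  have b_zero: "\<pi> b = 0"
    using pi_reflection[of z] Im_z zero t_pos by (simp add: b_def strip_def)
  define h where "h p = (zeta_at z p - zeta_at b p) - (zeta_at z 0 - zeta_at b 0)" for p
  have h_diff: "h field_differentiable at p" if "p \<notin> lattice_cosets \<tau> {z, b}" for p
    unfolding h_def[abs_def] using that
    by (intro field_differentiable_diff zeta_at_field_differentiable field_differentiable_const)
       (auto simp: lattice_cosets_def)
  have h_per: "h (p + 1) = h p \<and> h (p + \<tau>) = h p" if "p \<notin> lattice_cosets \<tau> {z, b}" for p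
    using that by (simp add: h_def lattice_cosets_def zeta_at_quasi_periodic)
  have "((\<lambda>u. (u - z) * h u) \<longlongrightarrow> 1 / of_real freq) (at z)"
    unfolding h_def by (rule zeta_pair_pole[OF zb])
  then have lim_z: "\<exists>c. ((\<lambda>u. \<pi> u * h u) \<longlongrightarrow> c) (at z)"
    by (rule tendsto_pi_mult_at_zero[OF z_PS zero])
  have "((\<lambda>u. - ((u - b) * (zeta_at b u - zeta_at z u - (zeta_at b 0 - zeta_at z 0))))
      \<longlongrightarrow> - (1 / of_real freq)) (at b)"
    by (intro tendsto_minus zeta_pair_pole[OF bz])
  then have "((\<lambda>u. (u - b) * h u) \<longlongrightarrow> - (1 / of_real freq)) (at b)"
    by (simp add: h_def algebra_simps)
  then have lim_b: "\<exists>c. ((\<lambda>u. \<pi> u * h u) \<longlongrightarrow> c) (at b)"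
    by (rule tendsto_pi_mult_at_zero[OF b_PS b_zero])
  define f where "f = remove_sings (\<lambda>u. \<pi> u * h u)"
  have f: "sec_space \<tau> d (n - 1) f"
    unfolding f_def
  proof (rule sec_space_mult_elliptic[OF _ _ pi_space_Suc _ h_per])
    show "{z, b} \<inter> lattice \<tau> = {}"
      using z_PS b_PS by (auto simp: pole_set_def)
    show "h holomorphic_on - lattice_cosets \<tau> {z, b}"
      by (simp add: holomorphic_on_def field_differentiable_at_within h_diff)
    show "\<exists>c. ((\<lambda>u. \<pi> u * h u) \<longlongrightarrow> c) (at a)" if "a \<in> {z, b}" for a
      using that lim_z lim_b by blast
  qed (simp_all add: h_def)
  show False
  proof (rule no_positive_multiplier[OF f, where h = "\<lambda>s. h (midline s)" and \<kappa> = \<i>])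
    fix s
    have mid: "midline s \<notin> pole_set \<tau> d"
      by (rule strip_not_pole_set[OF midline_strip])
    have "midline s \<notin> lattice_coset \<tau> z" "midline s \<notin> lattice_coset \<tau> b"
      using Im_z Im_b by (intro not_in_lattice_coset; simp add: Im_midline abs_if)+
    then have "midline s \<notin> lattice_cosets \<tau> {z, b}"
      by (simp add: lattice_cosets_def)
    moreover have "open (- lattice_cosets \<tau> {z, b})"
      by (simp add: open_Compl closed_lattice_cosets)
    moreover have "h holomorphic_on - lattice_cosets \<tau> {z, b}"
      by (simp add: holomorphic_on_def field_differentiable_at_within h_diff)
    ultimately have "h analytic_on {midline s}"
      by (intro holomorphic_on_imp_analytic_at) auto
    then have "f (midline s) = \<pi> (midline s) * h (midline s)"
      unfolding f_def by (intro remove_sings_at_analytic analytic_on_mult pi_analytic[OF mid])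
    moreover have "Im (\<i> * h (midline s)) = 0 \<and> 0 < Re (\<i> * h (midline s))"
      unfolding h_def b_def by (rule zeta_reflected_difference_sign[OF Im_z Im_midline])
    ultimately show "f (midline s) = \<pi> (midline s) * h (midline s) \<and> Im (\<i> * h (midline s)) = 0
      \<and> 0 < Re (\<i> * h (midline s))"
      by blast
  qed
qed

lemma zeros_simple:
  assumes zero: "is_zero_at \<pi> z"
  shows "simple_zero_at \<pi> z"
proof (rule ccontr)
  assume not_simple: "\<not> simple_zero_at \<pi> z"
  have z: "z \<notin> lattice \<tau>"
    by (rule zero_not_in_lattice[OF zero])
  have "pole_order_le \<pi> z 1"
  proof (cases "z \<in> pole_set \<tau> d")
    case True
    then have "z - of_real d \<in> lattice \<tau>"
      using z by (auto simp: pole_set_eq_cosets lattice_coset_def)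
    moreover have "\<forall>l\<in>lattice \<tau>. pole_order_le \<pi> (of_real d + l) 1"
      using pi_space by (simp add: sec_space_def)
    ultimately show ?thesis
      by force
  next
    case False
    then show ?thesis
      by (intro analytic_imp_pole_order_le pi_analytic)
  qed
  then obtain q where q: "q analytic_on {z}" and double: "eventually (\<lambda>u. \<pi> u = (u - z) ^ 2 * q u) (at z)"
    using double_zero_factor zero not_simple by blast
  define l where "l = of_int (- \<lfloor>Im z / t\<rfloor>) * \<tau>"
  define z' where "z' = z + l"
  have l: "l \<in> lattice \<tau>"
    using lattice_intro[of 0 "- \<lfloor>Im z / t\<rfloor>"] by (simp add: l_def)
  have fl: "of_int \<lfloor>Im z / t\<rfloor> \<le> Im z / t" "Im z / t < of_int \<lfloor>Im z / t\<rfloor> + 1"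
    using floor_correct[of "Im z / t"] by simp_all
  have "of_int \<lfloor>Im z / t\<rfloor> * t \<le> Im z"
    using fl(1) by (simp only: pos_le_divide_eq[OF t_pos])
  moreover have "Im z < (of_int \<lfloor>Im z / t\<rfloor> + 1) * t"
    using fl(2) by (simp only: pos_divide_less_eq[OF t_pos])
  moreover have "Im z' = Im z - of_int \<lfloor>Im z / t\<rfloor> * t"
    by (simp add: z'_def l_def tau_eq)
  ultimately have Im_z': "0 \<le> Im z'" "Im z' < t"
    by (simp_all add: algebra_simps)
  have z': "z' \<notin> lattice \<tau>"
    using z lattice_diff[of z' l] l by (auto simp: z'_def)
  have zero': "(\<pi> \<longlongrightarrow> 0) (at z')"
    unfolding z'_def using tendsto_at_shift[OF eventually_pi_shift[OF l] zero[unfolded is_zero_at_def]] .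
  consider "Im z' = 0 \<or> Im z' = t / 2" | "0 < Im z'" "Im z' < t / 2" | "t / 2 < Im z'"
    using Im_z' by linarith
  then show False
  proof cases
    case 1
    have "(\<lambda>u. q (u - l)) analytic_on {z'}"
      using analytic_on_compose[of "\<lambda>u. u - l" "{z'}" q] q by (simp add: z'_def o_def analytic_intros)
    moreover have "eventually (\<lambda>u. \<pi> u = (u - z') ^ 2 * q (u - l)) (at z')"
      unfolding z'_def eventually_at_shift using double eventually_pi_shift[OF l, of z]
      by eventually_elim simp
    ultimately show False
      by (rule no_double_zero_on_symmetry_lines[OF z' 1])
  next
    case 2
    then have "z' \<notin> pole_set \<tau> d"
      using t_pos by (intro strip_not_pole_set) (simp add: strip_def)
    with 2 zero' show False
      using no_zero_below_midline pi_eq_0_if_tendsto by blast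
  next
    case 3
    then have strip: "z' \<in> strip"
      using Im_z' t_pos by (simp add: strip_def)
    then have "\<pi> z' = 0"
      using pi_eq_0_if_tendsto[OF strip_not_pole_set zero'] by simp
    then have "\<pi> (cnj z' + \<tau>) = 0"
      using pi_reflection[OF strip] by simp
    moreover have "0 < Im (cnj z' + \<tau>)" "Im (cnj z' + \<tau>) < t / 2"
      using 3 Im_z' by (simp_all add: Im_tau)
    ultimately show False
      using no_zero_below_midline by blast
  qed
qed

end

theorem corollary2p4:
  fixes \<tau> :: complex and d :: real and \<delta> :: real and w :: "complex \<Rightarrow> complex"
    and n :: nat and \<pi> :: "complex \<Rightarrow> complex"
  assumes tau: "Re \<tau> = 0" "Im \<tau> > 0"
    and D: "0 < d" "d < 1"
    and delta: "\<delta> > 0"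
    and w_hol: "w holomorphic_on {p. \<bar>Im p - Im \<tau> / 2\<bar> < \<delta>}"
    and w_per: "\<forall>p. \<bar>Im p - Im \<tau> / 2\<bar> < \<delta> \<longrightarrow> w (p + 1) = w p"
    and w_real: "\<forall>s::real. w (\<tau> / 2 + of_real s) \<in> \<real>"
    and n: "n \<ge> 1"
    and pi_space: "sec_space \<tau> d n \<pi>"
    and pi_monic: "(\<lambda>p. p ^ n * \<pi> p - 1) \<in> O[at 0](\<lambda>p. p)"
    and pi_orth: "\<forall>f. sec_space \<tau> d (n - 1) f \<longrightarrow>
        contour_integral (linepath (\<tau> / 2) (\<tau> / 2 + 1)) (\<lambda>p. \<pi> p * f p * exp (w p)) = 0"
  shows "\<forall>z. is_zero_at \<pi> z \<longrightarrow> simple_zero_at \<pi> z"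
proof -
  have "\<tau> = \<i> * of_real (Im \<tau>)"
    using tau(1) by (simp add: complex_eq_iff)
  then interpret orthogonal_section \<tau> "Im \<tau>" d n \<pi> w \<delta>
    using tau(2) n pi_space pi_monic delta w_hol w_real pi_orth by unfold_locales auto
  show ?thesis
    using zeros_simple by blast
qed

end
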